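(* Assume (A1)–(A3) and $m_1<0$. Then the quantity $V_1=\sum_{i\ge0}\pi_1(i)\mathbb E_{(i,0)}(Y_1(1))$ is well defined (the series converges absolutely), and for every $(k,\ell)\in\mathbb N\times\mathbb Z$, $\mathbb P_{(k,\ell)}$-almost surely, $\lim_{n\to\infty} Y_1(n)/n=V_1$.
   Context: Let $\mathbb N=\{0,1,2,\dots\}$ and fix an integer $k_0\ge1$. Let $\mu$, $\mu'_j$ ($0\le j<k_0$), $\mu''_i$ ($0\le i<k_0$), $\mu_{ij}$ ($0\le i,j<k_0$) be probability measures on $\mathbb Z^2$. The random walk $Z=(X(n),Y(n))$ on $\mathbb N^2$ has transition probabilities $p((i,j)\to(i',j'))$ equal to $\mu(i'-i,j'-j)$ if $i,j\ge k_0$; $\mu'_j(i'-i,j'-j)$ if $i\ge k_0$, $0\le j<k_0$; $\mu''_i(i'-i,j'-j)$ if $0\le i<k_0$, $j\ge k_0$; $\mu_{ij}(i'-i,j'-j)$ if $0\le i,j<k_0$. Assumptions: (A1) $\mu(a,b)=0$ if $a<-k_0$ or $b<-k_0$; $\mu'_j(a,b)=0$ if $a<-k_0$ or $b<-j$; $\mu''_i(a,b)=0$ if $b<-k_0$ or $a<-i$; $\mu_{ij}(a,b)=0$ if $a<-i$ or $b<-j$. (A2) There are $\delta,\gamma,C>0$ with $\sup_{(i,j)\in\mathbb N^2}\mathbb E_{(i,j)}[\exp(\delta(X(1)-i)+\gamma(Y(1)-j))]\le C$. (A3) $Z_0$, $Z_1$, $Z_2$ and $Z$ are irreducible on their state spaces.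 $Z_0$: random walk on $\mathbb Z^2$ with increment law $\mu$; $m_1=\sum a\mu(a,b)$. $Z_1=(X_1,Y_1)$: Markov chain on $\mathbb N\times\mathbb Z$ with $p_1((i,j)\to(i',j'))=\mu(i'-i,j'-j)$ if $i\ge k_0$ and $\mu''_i(i'-i,j'-j)$ if $0\le i<k_0$; $\mathbb P_{(k,\ell)}$ denotes its law started at $(k,\ell)$. $Z_2$: Markov chain on $\mathbb Z\times\mathbb N$ with transitions $\mu$ for $j\ge k_0$ and $\mu'_j$ for $0\le j<k_0$. The first coordinate $X_1$ is a Markov chain on $\mathbb N$; when $m_1<0$ it is positive recurrent, with invariant distribution $\pi_1$. *)

theory Defs
  imports "HOL-Probability.Probability"
begin

definition incZ :: "nat \<Rightarrow> (int\<times>int) pmf \<Rightarrow> (nat \<Rightarrow> (int\<times>int) pmf) \<Rightarrow> (nat \<Rightarrow> (int\<times>int) pmf)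
    \<Rightarrow> (nat \<Rightarrow> nat \<Rightarrow> (int\<times>int) pmf) \<Rightarrow> nat \<times> nat \<Rightarrow> (int\<times>int) pmf" where
  "incZ k0 \<mu> \<mu>' \<mu>'' \<mu>ij s =
     (if k0 \<le> fst s \<and> k0 \<le> snd s then \<mu>
      else if k0 \<le> fst s then \<mu>' (snd s)
      else if k0 \<le> snd s then \<mu>'' (fst s)
      else \<mu>ij (fst s) (snd s))"

definition trZ :: "nat \<Rightarrow> (int\<times>int) pmf \<Rightarrow> (nat \<Rightarrow> (int\<times>int) pmf) \<Rightarrow> (nat \<Rightarrow> (int\<times>int) pmf)
    \<Rightarrow> (nat \<Rightarrow> nat \<Rightarrow> (int\<times>int) pmf) \<Rightarrow> nat \<times> nat \<Rightarrow> (nat\<times>nat) pmf" where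
  "trZ k0 \<mu> \<mu>' \<mu>'' \<mu>ij s =
     map_pmf (\<lambda>d. (nat (int (fst s) + fst d), nat (int (snd s) + snd d))) (incZ k0 \<mu> \<mu>' \<mu>'' \<mu>ij s)"

definition trZ0 :: "(int\<times>int) pmf \<Rightarrow> int \<times> int \<Rightarrow> (int\<times>int) pmf" where
  "trZ0 \<mu> s = map_pmf (\<lambda>d. (fst s + fst d, snd s + snd d)) \<mu>"

definition trZ1 :: "nat \<Rightarrow> (int\<times>int) pmf \<Rightarrow> (nat \<Rightarrow> (int\<times>int) pmf) \<Rightarrow> nat \<times> int \<Rightarrow> (nat\<times>int) pmf" where
  "trZ1 k0 \<mu> \<mu>'' s =
     map_pmf (\<lambda>d. (nat (int (fst s) + fst d), snd s + snd d)) (if k0 \<le> fst s then \<mu> else \<mu>'' (fst s))"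

definition trZ2 :: "nat \<Rightarrow> (int\<times>int) pmf \<Rightarrow> (nat \<Rightarrow> (int\<times>int) pmf) \<Rightarrow> int \<times> nat \<Rightarrow> (int\<times>nat) pmf" where
  "trZ2 k0 \<mu> \<mu>' s =
     map_pmf (\<lambda>d. (fst s + fst d, nat (int (snd s) + snd d))) (if k0 \<le> snd s then \<mu> else \<mu>' (snd s))"

(* transition law of the first coordinate X1 of Z1 (does not depend on the second coordinate) *)
definition trX1 :: "nat \<Rightarrow> (int\<times>int) pmf \<Rightarrow> (nat \<Rightarrow> (int\<times>int) pmf) \<Rightarrow> nat \<Rightarrow> nat pmf" where
  "trX1 k0 \<mu> \<mu>'' i = map_pmf fst (trZ1 k0 \<mu> \<mu>'' (i, 0))"

definition irreducible_kernel :: "('s \<Rightarrow> 's pmf) \<Rightarrow> bool" where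
  "irreducible_kernel P \<longleftrightarrow> (\<forall>x y. (x, y) \<in> {(u, v). pmf (P u) v > 0}\<^sup>*)"

definition invariant_distr :: "('s \<Rightarrow> 's pmf) \<Rightarrow> 's pmf \<Rightarrow> bool" where
  "invariant_distr P \<pi>0 \<longleftrightarrow> bind_pmf \<pi>0 P = \<pi>0"

definition markov_chain_from :: "'w measure \<Rightarrow> ('s \<Rightarrow> 's pmf) \<Rightarrow> 's \<Rightarrow> (nat \<Rightarrow> 'w \<Rightarrow> 's) \<Rightarrow> bool" where
  "markov_chain_from M P x0 Z \<longleftrightarrow>
     prob_space M \<and>
     (\<forall>n. Z n \<in> M \<rightarrow>\<^sub>M count_space UNIV) \<and>
     (AE \<omega> in M. Z 0 \<omega> = x0) \<and>
     (\<forall>n (h :: nat \<Rightarrow> 's).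
        measure M {\<omega> \<in> space M. \<forall>m\<le>Suc n. Z m \<omega> = h m}
        = measure M {\<omega> \<in> space M. \<forall>m\<le>n. Z m \<omega> = h m} * pmf (P (h n)) (h (Suc n)))"

end

theory Submission
  imports Defs
begin

(* Away from the strip {x < k0} the walk Z1 has constant mean jump (m1, m2) with m1 < 0, so the
   first coordinate X1 is positive recurrent, and the second coordinate Y1 grows like
   the sum of the conditional mean jumps, m2 * n plus corrections from the visits of X1 to
   {0, ..., k0 - 1}.

   The remainders are martingales whose increments have uniformly bounded fourth moments (by the
   exponential moments (A2) and the lower bounds (A1) on the jumps), so they are o(n) almost
   surely by Markov's inequality and Borel-Cantelli.

   To identify the visit frequencies of X1, apply the same law of large numbers to the
   martingale built from the mean hitting time h_j of a level j. A maximum principle argument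
   shows that h_j x stays within a constant of x / (- m1), so this martingale also has bounded
   fourth moments. This yields liminf (frequency of j) >= 1 / E_j[return time to j] >= pi1 j
   by Kac's inequality, and since the pi1 j sum to 1 these lower bounds are limits. *)

section \<open>Path laws of Markov chains\<close>

primrec path_law :: "('s \<Rightarrow> 's pmf) \<Rightarrow> 's \<Rightarrow> nat \<Rightarrow> 's list pmf" where
  "path_law P x0 0 = return_pmf [x0]"
| "path_law P x0 (Suc n) = bind_pmf (path_law P x0 n) (\<lambda>w. map_pmf (\<lambda>s. w @ [s]) (P (last w)))"

lemma length_path_law: "w \<in> set_pmf (path_law P x0 n) \<Longrightarrow> length w = Suc n"
  by (induction n arbitrary: w) auto

lemma pmf_path_law_Suc:
  fixes P :: "'s \<Rightarrow> 's pmf"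
  shows "pmf (path_law P x0 (Suc n)) w =
     (if w = [] then 0 else pmf (path_law P x0 n) (butlast w) * pmf (P (last (butlast w))) (last w))"
proof -
  define c where "c = (if w = [] then 0 else ennreal (pmf (P (last (butlast w))) (last w)))"
  have "ennreal (pmf (path_law P x0 (Suc n)) w) =
     (\<integral>\<^sup>+v. pmf (map_pmf (\<lambda>s. v @ [s]) (P (last v))) w \<partial>measure_pmf (path_law P x0 n))"
    by (simp add: ennreal_pmf_bind)
  also have "\<dots> = (\<integral>\<^sup>+v. c * indicator {butlast w} v \<partial>measure_pmf (path_law P x0 n))"
  proof (rule nn_integral_cong)
    fix v :: "'s list"
    have inj: "inj (\<lambda>s. v @ [s])" by (auto simp: inj_def)
    show "ennreal (pmf (map_pmf (\<lambda>s. v @ [s]) (P (last v))) w) = c * indicator {butlast w} v"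
    proof (cases "w \<noteq> [] \<and> v = butlast w")
      case True
      then have "w = v @ [last w]" by (metis append_butlast_last_id)
      then show ?thesis using True pmf_map_inj'[OF inj, of "P (last v)" "last w"]
        by (simp add: c_def)
    next
      case False
      then have "w \<notin> (\<lambda>s. v @ [s]) ` set_pmf (P (last v))" by auto
      then show ?thesis using False by (auto simp: c_def pmf_map_outside)
    qed
  qed
  also have "\<dots> = c * pmf (path_law P x0 n) (butlast w)"
    by (simp add: nn_integral_cmult_indicator emeasure_pmf_single)
  finally show ?thesis
    by (auto simp: c_def ennreal_mult'[symmetric] mult.commute)
qed

definition path_of :: "(nat \<Rightarrow> 'w \<Rightarrow> 's) \<Rightarrow> nat \<Rightarrow> 'w \<Rightarrow> 's list" where
  "path_of Z n \<omega> = map (\<lambda>m. Z m \<omega>) [0..<Suc n]"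

lemma path_of_Suc: "path_of Z (Suc n) \<omega> = path_of Z n \<omega> @ [Z (Suc n) \<omega>]"
  by (simp add: path_of_def)

lemma length_path_of [simp]: "length (path_of Z n \<omega>) = Suc n"
  by (simp add: path_of_def)

lemma path_of_eq_iff: "path_of Z n \<omega> = v \<longleftrightarrow> length v = Suc n \<and> (\<forall>m\<le>n. Z m \<omega> = v ! m)"
  unfolding path_of_def list_eq_iff_nth_eq
  by (auto simp: less_Suc_eq_le simp del: upt_Suc)

lemma measurable_path_of:
  fixes Z :: "nat \<Rightarrow> 'w \<Rightarrow> 's::countable"
  assumes "\<And>n. Z n \<in> M \<rightarrow>\<^sub>M count_space UNIV"
  shows "path_of Z n \<in> M \<rightarrow>\<^sub>M count_space UNIV"
proof (induction n)
  case 0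
  have "path_of Z 0 = (\<lambda>s. [s]) \<circ> Z 0" by (auto simp: path_of_def)
  then show ?case using assms by (simp add: measurable_comp)
next
  case (Suc n)
  have "path_of Z (Suc n) = (\<lambda>\<omega>. (\<lambda>v \<omega>. v @ [Z (Suc n) \<omega>]) (path_of Z n \<omega>) \<omega>)"
    by (auto simp: path_of_Suc)
  moreover have "(\<lambda>\<omega>. v @ [Z (Suc n) \<omega>]) \<in> M \<rightarrow>\<^sub>M count_space UNIV" for v :: "'s list"
  proof -
    have "(\<lambda>\<omega>. v @ [Z (Suc n) \<omega>]) = (\<lambda>s. v @ [s]) \<circ> Z (Suc n)" by auto
    then show ?thesis using assms by (simp add: measurable_comp)
  qed
  then have "(\<lambda>\<omega>. (\<lambda>v \<omega>. v @ [Z (Suc n) \<omega>]) (path_of Z n \<omega>) \<omega>) \<in> M \<rightarrow>\<^sub>M count_space UNIV"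
    by (rule measurable_compose_countable'[where I=UNIV]) (use Suc in auto)
  ultimately show ?case by simp
qed

lemma measure_initial_state:
  assumes mc: "markov_chain_from M P x0 Z"
  shows "measure M {\<omega> \<in> space M. Z 0 \<omega> = x} = pmf (return_pmf x0) x"
proof -
  interpret prob_space M using mc by (simp add: markov_chain_from_def)
  have "Z 0 \<in> M \<rightarrow>\<^sub>M count_space UNIV" using mc by (simp add: markov_chain_from_def)
  then have meas: "{\<omega> \<in> space M. Z 0 \<omega> = x} \<in> sets M" by measurable
  have ae: "AE \<omega> in M. Z 0 \<omega> = x0" using mc by (simp add: markov_chain_from_def)
  show ?thesis
  proof (cases "x = x0")
    case True
    then show ?thesis using prob_Collect_eq_1[OF meas] ae by simp
  next
    case False
    then have "AE \<omega> in M. Z 0 \<omega> \<noteq> x" using ae by auto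
    then show ?thesis using prob_Collect_eq_0[OF meas] False by (simp add: pmf_return)
  qed
qed

lemma measure_path_of_eq:
  assumes mc: "markov_chain_from M P x0 Z"
  shows "measure M {\<omega> \<in> space M. path_of Z n \<omega> = w} = pmf (path_law P x0 n) w"
proof (induction n arbitrary: w)
  case 0
  show ?case
  proof (cases "\<exists>x. w = [x]")
    case True
    then obtain x where "w = [x]" by auto
    then show ?thesis using measure_initial_state[OF mc, of x]
      by (simp add: path_of_def pmf_return split: split_indicator)
  next
    case False
    then have "{\<omega> \<in> space M. path_of Z 0 \<omega> = w} = {}" by (auto simp: path_of_def)
    moreover have "pmf (path_law P x0 0) w = 0" using False by (auto simp: pmf_return split: split_indicator)
    ultimately show ?thesis by (metis measure_empty)
  qed
next
  case (Suc n)
  show ?case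
  proof (cases "length w = Suc (Suc n)")
    case False
    then have "{\<omega> \<in> space M. path_of Z (Suc n) \<omega> = w} = {}" by auto
    moreover have "pmf (path_law P x0 (Suc n)) w = 0"
      using False length_path_law by (metis set_pmf_iff)
    ultimately show ?thesis by (metis measure_empty)
  next
    case True
    have fdd: "measure M {\<omega> \<in> space M. \<forall>m\<le>Suc n. Z m \<omega> = w ! m}
        = measure M {\<omega> \<in> space M. \<forall>m\<le>n. Z m \<omega> = w ! m} * pmf (P (w ! n)) (w ! Suc n)"
      using mc unfolding markov_chain_from_def by blast
    have "{\<omega> \<in> space M. path_of Z (Suc n) \<omega> = w} = {\<omega> \<in> space M. \<forall>m\<le>Suc n. Z m \<omega> = w ! m}"
      using True by (auto simp: path_of_eq_iff)
    moreover have "{\<omega> \<in> space M. \<forall>m\<le>n. Z m \<omega> = w ! m} = {\<omega> \<in> space M. path_of Z n \<omega> = butlast w}"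
      using True by (auto simp: path_of_eq_iff nth_butlast)
    moreover have "last (butlast w) = w ! n"
      using True by (subst last_conv_nth) (auto simp: nth_butlast dest: arg_cong[where f=length])
    moreover have "last w = w ! Suc n"
      using True by (subst last_conv_nth) (auto dest: arg_cong[where f=length])
    ultimately show ?thesis
      unfolding pmf_path_law_Suc using fdd Suc.IH True by auto
  qed
qed

lemma distr_path_of_eq:
  fixes Z :: "nat \<Rightarrow> 'w \<Rightarrow> 's::countable"
  assumes mc: "markov_chain_from M P x0 Z"
  shows "distr M (count_space UNIV) (path_of Z n) = measure_pmf (path_law P x0 n)"
proof (rule measure_eqI_countable[where A=UNIV])
  interpret prob_space M using mc by (simp add: markov_chain_from_def)
  have mp: "path_of Z n \<in> M \<rightarrow>\<^sub>M count_space UNIV"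
    using mc by (intro measurable_path_of) (simp add: markov_chain_from_def)
  fix w :: "'s list"
  have "path_of Z n -` {w} \<inter> space M = {\<omega> \<in> space M. path_of Z n \<omega> = w}" by auto
  then show "emeasure (distr M (count_space UNIV) (path_of Z n)) {w} = emeasure (measure_pmf (path_law P x0 n)) {w}"
    using mp by (simp add: emeasure_distr emeasure_eq_measure measure_path_of_eq[OF mc] emeasure_pmf_single)
qed auto

section \<open>A strong law for martingale increments along a Markov chain\<close>

lemma abs_power_le_1_plus_power4:
  fixes t :: real
  assumes "k \<le> 4"
  shows "\<bar>t\<bar> ^ k \<le> 1 + t ^ 4"
proof (cases "\<bar>t\<bar> \<le> 1")
  case True
  then show ?thesis by (simp add: power_le_one add_increasing2)
next
  case False
  then have "\<bar>t\<bar> ^ k \<le> \<bar>t\<bar> ^ 4" by (intro power_increasing) (use assms in auto)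
  then show ?thesis by (simp add: power_abs)
qed

lemma integrable_power_le_4:
  fixes p :: "'s pmf" and f :: "'s \<Rightarrow> real"
  assumes "integrable p (\<lambda>s. f s ^ 4)" "k \<le> 4"
  shows "integrable p (\<lambda>s. f s ^ k)"
  by (rule Bochner_Integration.integrable_bound[where f="\<lambda>s. 1 + f s ^ 4"])
     (use assms abs_power_le_1_plus_power4[OF assms(2)] in \<open>auto simp: power_abs\<close>)

lemma abs_moment_le_1_plus_power4:
  fixes p :: "'s pmf" and f :: "'s \<Rightarrow> real"
  assumes int4: "integrable p (\<lambda>s. f s ^ 4)" and "k \<le> 4"
  shows "\<bar>\<integral>s. f s ^ k \<partial>p\<bar> \<le> 1 + (\<integral>s. f s ^ 4 \<partial>p)"
proof -
  have "\<bar>\<integral>s. f s ^ k \<partial>p\<bar> \<le> (\<integral>s. \<bar>f s ^ k\<bar> \<partial>p)" by (rule integral_abs_bound)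
  also have "\<dots> \<le> (\<integral>s. 1 + f s ^ 4 \<partial>p)"
    by (rule integral_mono[OF integrable_abs[OF integrable_power_le_4[OF assms]]])
       (use int4 abs_power_le_1_plus_power4[OF assms(2)] in \<open>auto simp: power_abs\<close>)
  finally show ?thesis using int4 by simp
qed

lemma nn_integral_shift_square_le:
  fixes p :: "'s pmf" and f :: "'s \<Rightarrow> real"
  assumes int4: "integrable p (\<lambda>s. f s ^ 4)" and mean0: "(\<integral>s. f s \<partial>p) = 0"
    and bound: "(\<integral>s. f s ^ 4 \<partial>p) \<le> K"
  shows "(\<integral>\<^sup>+s. ennreal ((a + f s)\<^sup>2) \<partial>p) \<le> ennreal (a\<^sup>2 + (1 + K))"
proof -
  have i1: "integrable p f" and i2: "integrable p (\<lambda>s. (f s)\<^sup>2)"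
    using integrable_power_le_4[OF int4, of 1] integrable_power_le_4[OF int4, of 2] by auto
  have "integrable p (\<lambda>s. (a + f s)\<^sup>2)" using i1 i2 by (simp add: power2_sum)
  then have "(\<integral>\<^sup>+s. ennreal ((a + f s)\<^sup>2) \<partial>p) = ennreal (\<integral>s. (a + f s)\<^sup>2 \<partial>p)"
    by (auto intro!: nn_integral_eq_integral)
  also have "\<dots> \<le> ennreal (a\<^sup>2 + (1 + K))"
  proof (rule ennreal_leI)
    have "(\<integral>s. (a + f s)\<^sup>2 \<partial>p) = a\<^sup>2 + (\<integral>s. (f s)\<^sup>2 \<partial>p) + 2 * a * (\<integral>s. f s \<partial>p)"
      using i1 i2 by (simp add: power2_sum)
    then show "(\<integral>s. (a + f s)\<^sup>2 \<partial>p) \<le> a\<^sup>2 + (1 + K)"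
      using mean0 bound abs_moment_le_1_plus_power4[OF int4, of 2] by simp
  qed
  finally show ?thesis .
qed

lemma nn_integral_shift_power4_le:
  fixes p :: "'s pmf" and f :: "'s \<Rightarrow> real"
  assumes int4: "integrable p (\<lambda>s. f s ^ 4)" and mean0: "(\<integral>s. f s \<partial>p) = 0"
    and bound: "(\<integral>s. f s ^ 4 \<partial>p) \<le> K"
  shows "(\<integral>\<^sup>+s. ennreal ((a + f s) ^ 4) \<partial>p) \<le> ennreal (a ^ 4 + 8 * (1 + K) * a\<^sup>2 + 3 * (1 + K))"
proof -
  have ik: "integrable p (\<lambda>s. f s ^ k)" if "k \<le> 4" for k
    using integrable_power_le_4[OF int4 that] .
  have mk: "\<bar>\<integral>s. f s ^ k \<partial>p\<bar> \<le> 1 + K" if "k \<le> 4" for k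
    using abs_moment_le_1_plus_power4[OF int4 that] bound by simp
  have K: "0 \<le> 1 + K" using mk[of 0] by simp
  have expand: "(a + f s) ^ 4 = a ^ 4 + (4 * a ^ 3) * f s ^ 1 + (6 * a\<^sup>2) * f s ^ 2
      + (4 * a) * f s ^ 3 + f s ^ 4" for s
    by (simp add: power2_eq_square power3_eq_cube power4_eq_xxxx algebra_simps)
  have i4: "integrable p (\<lambda>s. (a + f s) ^ 4)"
    unfolding expand using ik[of 1] ik[of 2] ik[of 3] int4 by simp
  have "(\<integral>s. (a + f s) ^ 4 \<partial>p) = a ^ 4 + (4 * a ^ 3) * (\<integral>s. f s ^ 1 \<partial>p)
      + (6 * a\<^sup>2) * (\<integral>s. f s ^ 2 \<partial>p) + (4 * a) * (\<integral>s. f s ^ 3 \<partial>p) + (\<integral>s. f s ^ 4 \<partial>p)"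
    unfolding expand using ik[of 1] ik[of 2] ik[of 3] int4 by simp
  also have "\<dots> \<le> a ^ 4 + 6 * a\<^sup>2 * (1 + K) + 4 * \<bar>a\<bar> * (1 + K) + K"
  proof -
    have "(6 * a\<^sup>2) * (\<integral>s. f s ^ 2 \<partial>p) \<le> 6 * a\<^sup>2 * (1 + K)"
      using mk[of 2] by (intro mult_left_mono) auto
    moreover have "(4 * a) * (\<integral>s. f s ^ 3 \<partial>p) \<le> 4 * \<bar>a\<bar> * (1 + K)"
    proof -
      have "(4 * a) * (\<integral>s. f s ^ 3 \<partial>p) \<le> 4 * \<bar>a\<bar> * \<bar>\<integral>s. f s ^ 3 \<partial>p\<bar>"
        by (metis abs_ge_self abs_mult abs_numeral mult.assoc)
      also have "\<dots> \<le> 4 * \<bar>a\<bar> * (1 + K)" using mk[of 3] by (intro mult_left_mono) auto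
      finally show ?thesis .
    qed
    ultimately show ?thesis using mean0 bound by simp
  qed
  also have "\<dots> \<le> a ^ 4 + 8 * (1 + K) * a\<^sup>2 + 3 * (1 + K)"
  proof -
    have "2 * \<bar>a\<bar> \<le> 1 + a\<^sup>2"
      using zero_le_power2[of "\<bar>a\<bar> - 1"] by (simp add: power2_eq_square algebra_simps)
    then have "4 * \<bar>a\<bar> * (1 + K) \<le> (2 + 2 * a\<^sup>2) * (1 + K)" using K by (intro mult_right_mono) auto
    then show ?thesis by (simp add: algebra_simps)
  qed
  finally have "(\<integral>s. (a + f s) ^ 4 \<partial>p) \<le> a ^ 4 + 8 * (1 + K) * a\<^sup>2 + 3 * (1 + K)" .
  moreover have "(\<integral>\<^sup>+s. ennreal ((a + f s) ^ 4) \<partial>p) = ennreal (\<integral>s. (a + f s) ^ 4 \<partial>p)"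
    by (auto intro!: nn_integral_eq_integral[OF i4])
  ultimately show ?thesis by (simp add: ennreal_leI)
qed

definition increment_sum :: "('s \<Rightarrow> 's \<Rightarrow> real) \<Rightarrow> 's list \<Rightarrow> real" where
  "increment_sum F w = (\<Sum>m < length w - 1. F (w ! m) (w ! Suc m))"

lemma increment_sum_snoc:
  assumes "w \<noteq> []"
  shows "increment_sum F (w @ [s]) = increment_sum F w + F (last w) s"
proof -
  obtain k where k: "length w = Suc k" using assms by (cases w) auto
  have "(\<Sum>m < k. F ((w @ [s]) ! m) ((w @ [s]) ! Suc m)) = (\<Sum>m < k. F (w ! m) (w ! Suc m))"
    by (rule sum.cong) (use k in \<open>auto simp: nth_append\<close>)
  moreover have "(w @ [s]) ! k = last w" "(w @ [s]) ! Suc k = s"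
    using k assms by (simp_all add: nth_append last_conv_nth)
  ultimately show ?thesis unfolding increment_sum_def using k by simp
qed

lemma increment_sum_path_of:
  "increment_sum F (path_of Z n \<omega>) = (\<Sum>m<n. F (Z m \<omega>) (Z (Suc m) \<omega>))"
  unfolding increment_sum_def path_of_def by (intro sum.cong) (auto simp del: upt_Suc)

lemma nn_integral_path_law_Suc:
  "(\<integral>\<^sup>+w. g (increment_sum F w) \<partial>path_law P x0 (Suc n)) =
   (\<integral>\<^sup>+w. (\<integral>\<^sup>+s. g (increment_sum F w + F (last w) s) \<partial>P (last w)) \<partial>path_law P x0 n)"
proof -
  have "w \<noteq> []" if "w \<in> set_pmf (path_law P x0 n)" for w
    using length_path_law[OF that] by auto
  then show ?thesis
    by (auto intro!: nn_integral_cong_AE AE_pmfI simp: increment_sum_snoc)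
qed

context
  fixes P :: "'s \<Rightarrow> 's pmf" and F :: "'s \<Rightarrow> 's \<Rightarrow> real" and K :: real
  assumes int4: "\<And>x. integrable (P x) (\<lambda>s. F x s ^ 4)"
    and mean0: "\<And>x. (\<integral>s. F x s \<partial>P x) = 0"
    and bound: "\<And>x. (\<integral>s. F x s ^ 4 \<partial>P x) \<le> K"
begin

lemma increment_bound_nonneg: "0 \<le> K"
proof -
  have "0 \<le> (\<integral>s. F x s ^ 4 \<partial>P x)" for x by (rule Bochner_Integration.integral_nonneg) simp
  then show ?thesis using bound order_trans by blast
qed

lemma second_moment_increment_sum:
  "(\<integral>\<^sup>+w. ennreal ((increment_sum F w)\<^sup>2) \<partial>path_law P x0 n) \<le> ennreal (real n * (1 + K))"
proof (induction n)
  case 0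
  show ?case by (simp add: increment_sum_def)
next
  case (Suc n)
  note K = increment_bound_nonneg
  have "(\<integral>\<^sup>+w. ennreal ((increment_sum F w)\<^sup>2) \<partial>path_law P x0 (Suc n))
      = (\<integral>\<^sup>+w. (\<integral>\<^sup>+s. ennreal ((increment_sum F w + F (last w) s)\<^sup>2) \<partial>P (last w)) \<partial>path_law P x0 n)"
    by (rule nn_integral_path_law_Suc)
  also have "\<dots> \<le> (\<integral>\<^sup>+w. ennreal ((increment_sum F w)\<^sup>2) + ennreal (1 + K) \<partial>path_law P x0 n)"
    using K by (intro nn_integral_mono order_trans[OF nn_integral_shift_square_le[OF int4 mean0 bound]])
      (simp add: ennreal_plus)
  also have "\<dots> = (\<integral>\<^sup>+w. ennreal ((increment_sum F w)\<^sup>2) \<partial>path_law P x0 n) + ennreal (1 + K)"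
    by (simp add: nn_integral_add measure_pmf.emeasure_space_1)
  also have "\<dots> \<le> ennreal (real n * (1 + K)) + ennreal (1 + K)"
    using Suc.IH by (rule add_right_mono)
  also have "\<dots> = ennreal (real (Suc n) * (1 + K))"
    using K by (subst ennreal_plus[symmetric]) (auto simp: algebra_simps)
  finally show ?case .
qed

lemma fourth_moment_increment_sum:
  "(\<integral>\<^sup>+w. ennreal ((increment_sum F w) ^ 4) \<partial>path_law P x0 n) \<le> ennreal (11 * (1 + K)\<^sup>2 * (real n)\<^sup>2)"
proof (induction n)
  case 0
  show ?case by (simp add: increment_sum_def)
next
  case (Suc n)
  note K = increment_bound_nonneg
  let ?S2 = "\<lambda>w. ennreal ((increment_sum F w)\<^sup>2)" and ?S4 = "\<lambda>w. ennreal ((increment_sum F w) ^ 4)"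
  have "(\<integral>\<^sup>+w. ?S4 w \<partial>path_law P x0 (Suc n))
      = (\<integral>\<^sup>+w. (\<integral>\<^sup>+s. ennreal ((increment_sum F w + F (last w) s) ^ 4) \<partial>P (last w)) \<partial>path_law P x0 n)"
    by (rule nn_integral_path_law_Suc)
  also have "\<dots> \<le> (\<integral>\<^sup>+w. ?S4 w + ennreal (8 * (1 + K)) * ?S2 w + ennreal (3 * (1 + K)) \<partial>path_law P x0 n)"
    using K by (intro nn_integral_mono order_trans[OF nn_integral_shift_power4_le[OF int4 mean0 bound]])
      (simp add: ennreal_plus ennreal_mult)
  also have "\<dots> = (\<integral>\<^sup>+w. ?S4 w \<partial>path_law P x0 n) + ennreal (8 * (1 + K)) * (\<integral>\<^sup>+w. ?S2 w \<partial>path_law P x0 n)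
      + ennreal (3 * (1 + K))"
    by (simp add: nn_integral_add nn_integral_cmult measure_pmf.emeasure_space_1)
  also have "\<dots> \<le> ennreal (11 * (1 + K)\<^sup>2 * (real n)\<^sup>2) + ennreal (8 * (1 + K)) * ennreal (real n * (1 + K))
      + ennreal (3 * (1 + K))"
    using Suc.IH second_moment_increment_sum[of x0 n] by (intro add_mono mult_left_mono) auto
  also have "\<dots> = ennreal (11 * (1 + K)\<^sup>2 * (real n)\<^sup>2 + 8 * (1 + K) * (real n * (1 + K)) + 3 * (1 + K))"
    using K by (simp add: ennreal_plus ennreal_mult)
  also have "\<dots> \<le> ennreal (11 * (1 + K)\<^sup>2 * (real (Suc n))\<^sup>2)"
  proof (rule ennreal_leI)
    have "3 * (1 + K) \<le> 11 * (1 + K)\<^sup>2"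
      using K mult_nonneg_nonneg[OF K K] by (simp add: power2_eq_square algebra_simps)
    moreover have "8 * (1 + K) * (real n * (1 + K)) \<le> 22 * (1 + K)\<^sup>2 * real n"
    proof -
      have "8 * (1 + K) * (real n * (1 + K)) = 8 * ((1 + K)\<^sup>2 * real n)"
        by (simp add: power2_eq_square algebra_simps)
      moreover have "0 \<le> (1 + K)\<^sup>2 * real n" by simp
      ultimately show ?thesis by (simp add: algebra_simps)
    qed
    ultimately show "11 * (1 + K)\<^sup>2 * (real n)\<^sup>2 + 8 * (1 + K) * (real n * (1 + K)) + 3 * (1 + K)
        \<le> 11 * (1 + K)\<^sup>2 * (real (Suc n))\<^sup>2"
      by (simp add: power2_eq_square algebra_simps)
  qed
  finally show ?case .
qed

end

lemma prob_increment_sum_ge: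
  fixes Z :: "nat \<Rightarrow> 'w \<Rightarrow> 's::countable"
  assumes mc: "markov_chain_from M P x0 Z"
    and int4: "\<And>x. integrable (P x) (\<lambda>s. F x s ^ 4)"
    and mean0: "\<And>x. (\<integral>s. F x s \<partial>P x) = 0"
    and bound: "\<And>x. (\<integral>s. F x s ^ 4 \<partial>P x) \<le> K"
    and c: "0 < c"
  shows "measure M {\<omega> \<in> space M. c \<le> \<bar>\<Sum>m<n. F (Z m \<omega>) (Z (Suc m) \<omega>)\<bar>}
           \<le> 11 * (1 + K)\<^sup>2 * (real n)\<^sup>2 / c ^ 4"
proof -
  interpret prob_space M using mc by (simp add: markov_chain_from_def)
  have mp: "path_of Z n \<in> M \<rightarrow>\<^sub>M count_space UNIV"
    using mc by (intro measurable_path_of) (simp add: markov_chain_from_def)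
  define A where "A = {w. c \<le> \<bar>increment_sum F w\<bar>}"
  define E where "E = {\<omega> \<in> space M. c \<le> \<bar>\<Sum>m<n. F (Z m \<omega>) (Z (Suc m) \<omega>)\<bar>}"
  have "E = path_of Z n -` A \<inter> space M"
    by (auto simp: E_def A_def increment_sum_path_of)
  then have "emeasure M E = emeasure (distr M (count_space UNIV) (path_of Z n)) A"
    using mp by (simp add: emeasure_distr)
  also have "\<dots> = emeasure (path_law P x0 n) A"
    by (simp add: distr_path_of_eq[OF mc])
  finally have E_eq: "emeasure M E = emeasure (path_law P x0 n) A" .
  have "ennreal (c ^ 4) * emeasure (path_law P x0 n) A
      = (\<integral>\<^sup>+w. ennreal (c ^ 4) * indicator A w \<partial>path_law P x0 n)"
    by (simp add: nn_integral_cmult_indicator)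
  also have "\<dots> \<le> (\<integral>\<^sup>+w. ennreal ((increment_sum F w) ^ 4) \<partial>path_law P x0 n)"
  proof (intro nn_integral_mono)
    fix w
    have "w \<in> A \<Longrightarrow> c ^ 4 \<le> \<bar>increment_sum F w\<bar> ^ 4"
      using c by (intro power_mono) (auto simp: A_def)
    then show "ennreal (c ^ 4) * indicator A w \<le> ennreal ((increment_sum F w) ^ 4)"
      by (auto simp: power_abs ennreal_leI split: split_indicator)
  qed
  also have "\<dots> \<le> ennreal (11 * (1 + K)\<^sup>2 * (real n)\<^sup>2)"
    by (rule fourth_moment_increment_sum[OF int4 mean0 bound])
  finally have "ennreal (c ^ 4 * measure M E) \<le> ennreal (11 * (1 + K)\<^sup>2 * (real n)\<^sup>2)"
    using c by (simp add: E_eq[symmetric] emeasure_eq_measure ennreal_mult)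
  then have "c ^ 4 * measure M E \<le> 11 * (1 + K)\<^sup>2 * (real n)\<^sup>2"
    by (rule ennreal_le_iff[THEN iffD1, rotated]) simp
  then show ?thesis
    unfolding E_def[symmetric] using c by (simp add: le_divide_eq mult.commute)
qed

lemma LIMSEQ_divide_real_zero:
  fixes x :: "nat \<Rightarrow> real"
  assumes "\<And>k. eventually (\<lambda>n. \<bar>x n\<bar> < real n / Suc k) sequentially"
  shows "(\<lambda>n. x n / real n) \<longlonglongrightarrow> 0"
proof (rule LIMSEQ_I)
  fix r :: real assume "0 < r"
  then obtain k :: nat where k: "1 / Suc k < r" by (metis nat_approx_posE)
  have "eventually (\<lambda>n. norm (x n / real n - 0) < r) sequentially"
    using assms[of k] eventually_gt_at_top[of 0]
  proof eventually_elim
    case (elim n)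
    then have "\<bar>x n\<bar> / real n < 1 / Suc k" by (simp add: divide_less_eq)
    then show ?case using k by simp
  qed
  then show "\<exists>N. \<forall>n\<ge>N. norm (x n / real n - 0) < r" by (simp add: eventually_sequentially)
qed

(* The fourth moment of the n-th partial sum is O(n^2), so Markov's inequality and
   Borel-Cantelli apply. *)
lemma markov_chain_increments_slln:
  fixes Z :: "nat \<Rightarrow> 'w \<Rightarrow> 's::countable"
  assumes mc: "markov_chain_from M P x0 Z"
    and int4: "\<And>x. integrable (P x) (\<lambda>s. F x s ^ 4)"
    and mean0: "\<And>x. (\<integral>s. F x s \<partial>P x) = 0"
    and bound: "\<And>x. (\<integral>s. F x s ^ 4 \<partial>P x) \<le> K"
  shows "AE \<omega> in M. (\<lambda>n. (\<Sum>m<n. F (Z m \<omega>) (Z (Suc m) \<omega>)) / real n) \<longlonglongrightarrow> 0"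
proof -
  interpret prob_space M using mc by (simp add: markov_chain_from_def)
  have mp: "path_of Z n \<in> M \<rightarrow>\<^sub>M count_space UNIV" for n
    using mc by (intro measurable_path_of) (simp add: markov_chain_from_def)
  define S where "S n \<omega> = (\<Sum>m<n. F (Z m \<omega>) (Z (Suc m) \<omega>))" for n \<omega>
  have small: "AE \<omega> in M. eventually (\<lambda>n. \<bar>S n \<omega>\<bar> < e * real n) sequentially" if e: "0 < e" for e
  proof -
    define A where "A n = {\<omega> \<in> space M. e * real n \<le> \<bar>S n \<omega>\<bar>}" for n
    have A_eq: "A n = path_of Z n -` {w. e * real n \<le> \<bar>increment_sum F w\<bar>} \<inter> space M" for n
      by (auto simp: A_def S_def increment_sum_path_of)
    have A_sets: "A n \<in> sets M" for n
      unfolding A_eq by (rule measurable_sets[OF mp]) simp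
    have "measure M (A n) \<le> 11 * (1 + K)\<^sup>2 / e ^ 4 * inverse ((real n)\<^sup>2)" if "1 \<le> n" for n
    proof -
      have "measure M (A n) \<le> 11 * (1 + K)\<^sup>2 * (real n)\<^sup>2 / (e * real n) ^ 4"
        using prob_increment_sum_ge[OF mc int4 mean0 bound, of "e * real n" n] e that
        by (simp add: A_def S_def)
      also have "\<dots> = 11 * (1 + K)\<^sup>2 / e ^ 4 * inverse ((real n)\<^sup>2)"
        using e that by (simp add: field_simps power_mult_distrib power2_eq_square power4_eq_xxxx)
      finally show ?thesis .
    qed
    then have "summable (\<lambda>n. measure M (A n))"
      by (intro summable_comparison_test'[where N=1,
            OF summable_mult[OF inverse_power_summable, of 2 "11 * (1 + K)\<^sup>2 / e ^ 4"]]) auto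
    then have "AE \<omega> in M. eventually (\<lambda>n. \<omega> \<in> space M - A n) sequentially"
      using A_sets by (intro borel_cantelli_AE1) (auto simp: emeasure_eq_measure)
    then show ?thesis by (rule AE_mp) (auto simp: A_def not_le elim!: eventually_mono)
  qed
  have "AE \<omega> in M. \<forall>k::nat. eventually (\<lambda>n. \<bar>S n \<omega>\<bar> < real n / Suc k) sequentially"
    using small[of "1 / Suc _"] by (subst AE_all_countable) (simp add: field_simps)
  then show ?thesis
    unfolding S_def by (rule AE_mp) (intro AE_I2 impI LIMSEQ_divide_real_zero, blast)
qed

section \<open>Visit frequencies\<close>

lemma pmf_sums_1: "(\<lambda>i. pmf p i) sums 1" for p :: "nat pmf"
proof -
  have "(\<Sum>i. ennreal (pmf p i)) = 1"
    using nn_integral_count_space_nat[of "\<lambda>i. ennreal (pmf p i)"] nn_integral_pmf[where p=p and A=UNIV]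
    by (simp add: measure_pmf.emeasure_space_1)
  then have "(\<lambda>i. ennreal (pmf p i)) sums ennreal 1"
    using summable_sums[OF summableI[of "\<lambda>i. ennreal (pmf p i)"]] by simp
  then show ?thesis by (subst (asm) sums_ennreal) auto
qed

definition visit_frequency :: "(nat \<Rightarrow> 'a) \<Rightarrow> 'a \<Rightarrow> nat \<Rightarrow> real" where
  "visit_frequency X j n = (\<Sum>m<n. of_bool (X m = j)) / real n"

lemma sum_visit_frequency_le_1:
  assumes "finite F"
  shows "(\<Sum>j\<in>F. visit_frequency X j n) \<le> 1"
proof -
  have "(\<Sum>j\<in>F. \<Sum>m<n. of_bool (X m = j) :: real) = (\<Sum>m<n. of_bool (X m \<in> F))"
    using assms by (subst sum.swap) (simp add: sum.delta of_bool_def)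
  also have "\<dots> \<le> (\<Sum>m<n. 1)" by (intro sum_mono) simp
  finally show ?thesis
    unfolding visit_frequency_def sum_divide_distrib[symmetric]
    by (cases "n = 0") (auto simp: divide_le_eq)
qed

(* Telescoping: the sum equals u n - u 0 + n - c * (number of visits), and u n \<ge> 0. *)
lemma average_lower_bound_of_potential:
  fixes u ind :: "nat \<Rightarrow> real"
  assumes lim: "(\<lambda>n. (\<Sum>m<n. u (Suc m) - u m + 1 - c * ind m) / real n) \<longlonglongrightarrow> 0"
    and u0: "\<And>m. 0 \<le> u m" and c: "0 < c" and pc: "p * c \<le> 1" and e: "0 < e"
  shows "eventually (\<lambda>n. p - e \<le> (\<Sum>m<n. ind m) / real n) sequentially"
proof -
  define e' where "e' = e * c / 2"
  have e': "0 < e'" unfolding e'_def using e c by simp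
  have sum_eq: "(\<Sum>m<n. u (Suc m) - u m + 1 - c * ind m) = u n - u 0 + real n - c * (\<Sum>m<n. ind m)" for n
    by (induction n) (auto simp: algebra_simps)
  have "eventually (\<lambda>n. \<bar>(\<Sum>m<n. u (Suc m) - u m + 1 - c * ind m) / real n\<bar> < e') sequentially"
    using lim e' by (auto simp: LIMSEQ_iff eventually_sequentially)
  moreover have "eventually (\<lambda>n. \<bar>u 0 / real n\<bar> < e') sequentially"
    using lim_const_over_n[of "u 0"] e' by (auto simp: LIMSEQ_iff eventually_sequentially)
  ultimately show ?thesis
    using eventually_ge_at_top[of 1]
  proof eventually_elim
    case (elim n)
    then have n: "0 < real n" by simp
    have "u n - u 0 + real n - c * (\<Sum>m<n. ind m) < e' * real n" "u 0 < e' * real n"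
      using elim n u0[of 0] unfolding sum_eq by (auto simp: abs_less_iff divide_less_eq)
    then have "real n - c * (\<Sum>m<n. ind m) < e * c * real n"
      using u0[of n] unfolding e'_def by simp
    moreover have "c * ((p - e) * real n) \<le> real n - e * c * real n"
      using mult_right_mono[OF pc, of "real n"] n by (simp add: algebra_simps)
    ultimately have "c * ((p - e) * real n) < c * (\<Sum>m<n. ind m)" by linarith
    then have "(p - e) * real n < (\<Sum>m<n. ind m)" using c by simp
    then show ?case using n by (simp add: le_divide_eq)
  qed
qed

lemma le_of_sum_le_1:
  fixes N p :: "'a \<Rightarrow> real"
  assumes F: "finite F" "j \<in> F" and tot: "(\<Sum>i\<in>F. N i) \<le> 1"
    and low: "\<And>i. i \<in> F \<Longrightarrow> p i - e \<le> N i" and e: "0 \<le> e"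
  shows "N j \<le> 1 - (\<Sum>i\<in>F. p i) + p j + real (card F) * e"
proof -
  have "(\<Sum>i\<in>F - {j}. p i - e) \<le> (\<Sum>i\<in>F - {j}. N i)" using low by (intro sum_mono) auto
  moreover have "(\<Sum>i\<in>F - {j}. p i - e) = (\<Sum>i\<in>F. p i) - p j - real (card F - 1) * e"
    using F by (simp add: sum_subtractf sum_diff1)
  moreover have "(\<Sum>i\<in>F. N i) = N j + (\<Sum>i\<in>F - {j}. N i)"
    using F by (simp add: sum.remove)
  moreover have "real (card F - 1) * e \<le> real (card F) * e" using e by (intro mult_right_mono) auto
  ultimately show ?thesis using tot by linarith
qed

lemma tendsto_of_lower_bounds_sums_1:
  fixes N :: "nat \<Rightarrow> nat \<Rightarrow> real" and p :: "nat \<Rightarrow> real"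
  assumes low: "\<And>j e. 0 < e \<Longrightarrow> eventually (\<lambda>n. p j - e \<le> N j n) sequentially"
    and tot: "\<And>n F. finite F \<Longrightarrow> (\<Sum>j\<in>F. N j n) \<le> 1"
    and p: "p sums 1"
  shows "(\<lambda>n. N j n) \<longlonglongrightarrow> p j"
proof (rule LIMSEQ_I)
  fix r :: real assume r: "0 < r"
  obtain m0 where m0: "\<And>m. m \<ge> m0 \<Longrightarrow> \<bar>(\<Sum>i<m. p i) - 1\<bar> < r / 2"
    using LIMSEQ_D[OF p[unfolded sums_def], of "r / 2"] r by auto
  define m where "m = max m0 (Suc j)"
  have jm: "j < m" by (simp add: m_def)
  have "\<bar>(\<Sum>i<m. p i) - 1\<bar> < r / 2" by (rule m0) (simp add: m_def)
  then have pm: "1 - r / 2 < (\<Sum>i<m. p i)" by linarith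
  define e where "e = r / (2 * real m)"
  have e: "0 < e" "real m * e = r / 2" using r jm by (auto simp: e_def)
  have "eventually (\<lambda>n. \<forall>i\<in>{..<m}. p i - e \<le> N i n) sequentially"
    using low e by (intro eventually_ball_finite) auto
  moreover have "eventually (\<lambda>n. p j - r / 2 \<le> N j n) sequentially"
    using low r by simp
  ultimately have "eventually (\<lambda>n. dist (N j n) (p j) < r) sequentially"
  proof eventually_elim
    case (elim n)
    have "N j n \<le> 1 - (\<Sum>i<m. p i) + p j + real m * e"
      using le_of_sum_le_1[of "{..<m}" j "\<lambda>i. N i n"] elim(1) tot[of "{..<m}" n] jm e by auto
    then show ?case using elim(2) pm e r by (simp add: dist_real_def abs_less_iff)
  qed
  then show "\<exists>n0. \<forall>n\<ge>n0. norm (N j n - p j) < r"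
    by (auto simp: eventually_sequentially dist_real_def)
qed

section \<open>Hitting times\<close>

lemma pmf_mult_le_nn_integral: "ennreal (pmf p x) * f x \<le> (\<integral>\<^sup>+y. f y \<partial>measure_pmf p)"
proof -
  have "(\<integral>\<^sup>+y. f x * indicator {x} y \<partial>measure_pmf p) \<le> (\<integral>\<^sup>+y. f y \<partial>measure_pmf p)"
    by (intro nn_integral_mono) (auto split: split_indicator)
  then show ?thesis by (simp add: nn_integral_cmult_indicator emeasure_pmf_single mult.commute)
qed

lemma pmf_le_pmf_map: "pmf p x \<le> pmf (map_pmf f p) (f x)"
  unfolding pmf_map by (simp add: measure_pmf_single[symmetric] measure_pmf.finite_measure_mono)

lemma SUP_Suc_eq_of_incseq: "incseq f \<Longrightarrow> (SUP t. f (Suc t)) = (SUP t. f t :: 'a::complete_lattice)"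
  by (rule antisym; rule SUP_mono) (auto dest: incseq_SucD)

lemma irreducible_kernel_map:
  assumes irr: "irreducible_kernel P" and Q: "\<And>s. map_pmf f (P s) = Q (f s)" and "surj f"
  shows "irreducible_kernel Q"
proof -
  have "(f s, f t) \<in> {(u, v). pmf (Q u) v > 0}\<^sup>*" for s t
    using irr[unfolded irreducible_kernel_def, rule_format, of s t]
  proof (induction rule: rtrancl_induct)
    case (step u v)
    then have "pmf (Q (f u)) (f v) > 0"
      using pmf_le_pmf_map[of "P u" v f] by (simp add: Q)
    then show ?case using step.IH by (auto intro: rtrancl_into_rtrancl)
  qed simp
  then show ?thesis using \<open>surj f\<close> unfolding irreducible_kernel_def by (metis surjD)
qed

lemma invariant_distr_pmf_step:
  assumes "invariant_distr Q \<pi>"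
  shows "pmf \<pi> x * pmf (Q x) y \<le> pmf \<pi> y"
proof -
  have "ennreal (pmf \<pi> x) * ennreal (pmf (Q x) y) \<le> (\<integral>\<^sup>+z. ennreal (pmf (Q z) y) \<partial>measure_pmf \<pi>)"
    by (rule pmf_mult_le_nn_integral)
  also have "\<dots> = ennreal (pmf (bind_pmf \<pi> Q) y)" by (simp add: ennreal_pmf_bind)
  finally show ?thesis
    using assms by (simp add: invariant_distr_def ennreal_mult'[symmetric])
qed

lemma invariant_distr_pmf_pos:
  assumes inv: "invariant_distr Q \<pi>" and irr: "irreducible_kernel Q"
  shows "0 < pmf \<pi> j"
proof -
  obtain x where x: "x \<in> set_pmf \<pi>" using set_pmf_not_empty[of \<pi>] by blast
  have "(x, j) \<in> {(u, v). pmf (Q u) v > 0}\<^sup>*" using irr by (simp add: irreducible_kernel_def)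
  then show ?thesis
  proof (induction rule: rtrancl_induct)
    case base
    then show ?case using x by (simp add: set_pmf_iff)
  next
    case (step u v)
    then have "0 < pmf \<pi> u * pmf (Q u) v" by simp
    then show ?case using invariant_distr_pmf_step[OF inv, of u v] by linarith
  qed
qed

(* truncated_hitting_time Q j t x = E_x min(T_j, t), where T_j is the hitting time of j
   by the chain with kernel Q. *)
primrec truncated_hitting_time :: "('a \<Rightarrow> 'a pmf) \<Rightarrow> 'a \<Rightarrow> nat \<Rightarrow> 'a \<Rightarrow> ennreal" where
  "truncated_hitting_time Q j 0 = (\<lambda>x. 0)"
| "truncated_hitting_time Q j (Suc t) =
     (\<lambda>x. if x = j then 0 else 1 + (\<integral>\<^sup>+y. truncated_hitting_time Q j t y \<partial>Q x))"

definition expected_hitting_time :: "('a \<Rightarrow> 'a pmf) \<Rightarrow> 'a \<Rightarrow> 'a \<Rightarrow> ennreal" where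
  "expected_hitting_time Q j x = (SUP t. truncated_hitting_time Q j t x)"

definition mean_hitting_time :: "('a \<Rightarrow> 'a pmf) \<Rightarrow> 'a \<Rightarrow> 'a \<Rightarrow> real" where
  "mean_hitting_time Q j x = enn2real (expected_hitting_time Q j x)"

context
  fixes Q :: "'a \<Rightarrow> 'a pmf"
begin

lemma truncated_hitting_time_Suc_le:
  "truncated_hitting_time Q j t x \<le> truncated_hitting_time Q j (Suc t) x"
proof (induction t arbitrary: x)
  case (Suc t)
  then have "(\<integral>\<^sup>+y. truncated_hitting_time Q j t y \<partial>Q x) \<le> (\<integral>\<^sup>+y. truncated_hitting_time Q j (Suc t) y \<partial>Q x)"
    by (intro nn_integral_mono)
  then show ?case by (simp add: add_left_mono)
qed simp

lemma incseq_truncated_hitting_time: "incseq (\<lambda>t. truncated_hitting_time Q j t)"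
  by (intro incseq_SucI le_funI truncated_hitting_time_Suc_le)

lemma truncated_hitting_time_le: "truncated_hitting_time Q j t x \<le> of_nat t"
proof (induction t arbitrary: x)
  case (Suc t)
  then have "(\<integral>\<^sup>+y. truncated_hitting_time Q j t y \<partial>Q x) \<le> (\<integral>\<^sup>+y. of_nat t \<partial>Q x)"
    by (intro nn_integral_mono)
  then show ?case by (simp add: measure_pmf.emeasure_space_1 add_left_mono add.commute)
qed simp

lemma nn_integral_expected_hitting_time:
  "(\<integral>\<^sup>+y. expected_hitting_time Q j y \<partial>Q x) = (SUP t. \<integral>\<^sup>+y. truncated_hitting_time Q j t y \<partial>Q x)"
  unfolding expected_hitting_time_def
  by (rule nn_integral_monotone_convergence_SUP[OF incseq_truncated_hitting_time]) simp

lemma expected_hitting_time_eq: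
  "expected_hitting_time Q j x = (if x = j then 0 else 1 + (\<integral>\<^sup>+y. expected_hitting_time Q j y \<partial>Q x))"
proof -
  have "incseq (\<lambda>t. truncated_hitting_time Q j t x)"
    using incseq_truncated_hitting_time[of j] by (auto simp: incseq_def le_fun_def)
  then have "expected_hitting_time Q j x = (SUP t. truncated_hitting_time Q j (Suc t) x)"
    unfolding expected_hitting_time_def by (rule SUP_Suc_eq_of_incseq[symmetric])
  also have "\<dots> = (if x = j then 0 else (SUP t. \<integral>\<^sup>+y. truncated_hitting_time Q j t y \<partial>Q x) + 1)"
  proof -
    have "(SUP t. (\<integral>\<^sup>+y. truncated_hitting_time Q j t y \<partial>Q x) + 1)
        = (SUP t. \<integral>\<^sup>+y. truncated_hitting_time Q j t y \<partial>Q x) + 1"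
      by (rule ennreal_SUP_add_left) simp
    then show ?thesis by (simp add: add.commute)
  qed
  finally show ?thesis by (simp add: nn_integral_expected_hitting_time add.commute)
qed

lemma expected_hitting_time_le_supersolution:
  assumes inside: "\<And>x. x \<in> A \<Longrightarrow> expected_hitting_time Q j x \<le> g x"
    and super: "\<And>x. x \<notin> A \<Longrightarrow> x \<noteq> j \<Longrightarrow> 1 + (\<integral>\<^sup>+y. g y \<partial>Q x) \<le> g x"
  shows "expected_hitting_time Q j x \<le> g x"
proof -
  have "truncated_hitting_time Q j t x \<le> g x" for t
  proof (induction t arbitrary: x)
    case (Suc t)
    show ?case
    proof (cases "x \<in> A")
      case True
      have "truncated_hitting_time Q j (Suc t) x \<le> expected_hitting_time Q j x"
        unfolding expected_hitting_time_def by (rule SUP_upper) simp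
      then show ?thesis using inside[OF True] by (rule order_trans)
    next
      case outside: False
      show ?thesis
      proof (cases "x = j")
        case False
        then have "truncated_hitting_time Q j (Suc t) x = 1 + (\<integral>\<^sup>+y. truncated_hitting_time Q j t y \<partial>Q x)"
          by simp
        also have "\<dots> \<le> 1 + (\<integral>\<^sup>+y. g y \<partial>Q x)"
          using Suc.IH by (intro add_left_mono nn_integral_mono)
        also have "\<dots> \<le> g x" using super[OF outside False] .
        finally show ?thesis .
      qed simp
    qed
  qed simp
  then show ?thesis unfolding expected_hitting_time_def by (rule SUP_least)
qed

(* With I t = \<integral> E_x min(T_j, t) d\<pi>, invariance of \<pi> gives
   I (t + 1) = \<pi>(- {j}) + I t - \<pi>(j) * \<integral> E_y min(T_j, t) dQ(j), and I is increasing. *)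
lemma pmf_mult_nn_integral_truncated_hitting_time_le:
  assumes inv: "invariant_distr Q \<pi>"
  shows "ennreal (pmf \<pi> j) * (\<integral>\<^sup>+y. truncated_hitting_time Q j t y \<partial>Q j) \<le> ennreal (1 - pmf \<pi> j)"
proof -
  define QH where "QH x = (\<integral>\<^sup>+y. truncated_hitting_time Q j t y \<partial>Q x)" for x
  define I where "I t' = (\<integral>\<^sup>+x. truncated_hitting_time Q j t' x \<partial>\<pi>)" for t'
  define X where "X = (\<integral>\<^sup>+x. indicator (- {j}) x * QH x \<partial>\<pi>)"
  define E where "E = emeasure (measure_pmf \<pi>) (- {j})"
  have "I (Suc t) = (\<integral>\<^sup>+x. indicator (- {j}) x + indicator (- {j}) x * QH x \<partial>\<pi>)"
    unfolding I_def QH_def by (intro nn_integral_cong) (auto split: split_indicator)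
  then have I_Suc: "I (Suc t) = E + X"
    unfolding E_def X_def by (simp add: nn_integral_add)
  have "I t = (\<integral>\<^sup>+x. QH x \<partial>\<pi>)"
    using inv unfolding I_def QH_def invariant_distr_def by (metis nn_integral_bind_pmf)
  also have "\<dots> = (\<integral>\<^sup>+x. indicator (- {j}) x * QH x + QH j * indicator {j} x \<partial>\<pi>)"
    by (intro nn_integral_cong) (auto split: split_indicator)
  finally have I_t: "I t = X + ennreal (pmf \<pi> j) * QH j"
    unfolding X_def by (simp add: nn_integral_add nn_integral_cmult_indicator emeasure_pmf_single mult.commute)
  have "I t \<le> I (Suc t)"
    unfolding I_def by (intro nn_integral_mono truncated_hitting_time_Suc_le)
  moreover have "I (Suc t) \<le> of_nat (Suc t)"
    using nn_integral_mono[of "measure_pmf \<pi>" _ "\<lambda>_. of_nat (Suc t)", OF truncated_hitting_time_le]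
    by (simp add: I_def measure_pmf.emeasure_space_1)
  ultimately have "ennreal (pmf \<pi> j) * QH j \<le> E"
    using I_Suc I_t by (auto simp: ennreal_add_left_cancel_le top_unique add_ac
        dest: add_left_mono[where c=E] intro: order_trans)
  also have "E = ennreal (1 - pmf \<pi> j)"
    using measure_pmf.prob_compl[of "{j}" \<pi>]
    by (simp add: E_def measure_pmf.emeasure_eq_measure Compl_eq_Diff_UNIV measure_pmf_single)
  finally show ?thesis unfolding QH_def .
qed

lemma pmf_mult_nn_integral_expected_hitting_time_le:
  assumes "invariant_distr Q \<pi>"
  shows "ennreal (pmf \<pi> j) * (\<integral>\<^sup>+y. expected_hitting_time Q j y \<partial>Q j) \<le> ennreal (1 - pmf \<pi> j)"
  unfolding nn_integral_expected_hitting_time SUP_mult_left_ennreal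
  by (rule SUP_least) (rule pmf_mult_nn_integral_truncated_hitting_time_le[OF assms])

lemma mean_hitting_time_nonneg: "0 \<le> mean_hitting_time Q j x"
  by (simp add: mean_hitting_time_def)

lemma mean_hitting_time_self: "mean_hitting_time Q j j = 0"
  using expected_hitting_time_eq[of j j] by (simp add: mean_hitting_time_def)

end

locale positive_recurrent_kernel =
  fixes Q :: "'a \<Rightarrow> 'a pmf" and \<pi> :: "'a pmf"
  assumes irreducible: "irreducible_kernel Q" and invariant: "invariant_distr Q \<pi>"
begin

lemma nn_integral_expected_hitting_time_finite:
  "(\<integral>\<^sup>+y. expected_hitting_time Q j y \<partial>Q x) < \<top>"
proof -
  have at_j: "(\<integral>\<^sup>+y. expected_hitting_time Q j y \<partial>Q j) < \<top>"
  proof (rule ccontr)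
    assume "\<not> (\<integral>\<^sup>+y. expected_hitting_time Q j y \<partial>Q j) < \<top>"
    then have "(\<integral>\<^sup>+y. expected_hitting_time Q j y \<partial>Q j) = \<top>" by (metis less_top)
    then have "ennreal (pmf \<pi> j) * (\<integral>\<^sup>+y. expected_hitting_time Q j y \<partial>Q j) = \<top>"
      using invariant_distr_pmf_pos[OF invariant irreducible, of j] by (simp add: ennreal_mult_top)
    then show False
      using pmf_mult_nn_integral_expected_hitting_time_le[OF invariant, of j] by (simp add: top_unique)
  qed
  have "(j, x) \<in> {(u, v). pmf (Q u) v > 0}\<^sup>*"
    using irreducible by (simp add: irreducible_kernel_def)
  then show ?thesis
  proof (induction rule: rtrancl_induct)
    case (step u v)
    have "ennreal (pmf (Q u) v) * expected_hitting_time Q j v < \<top>"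
      using pmf_mult_le_nn_integral step.IH by (rule le_less_trans)
    then have "expected_hitting_time Q j v < \<top>"
      using step.hyps(2) by (auto simp: ennreal_mult_less_top)
    then show ?case
      using at_j expected_hitting_time_eq[of Q j v] by (auto simp: top.not_eq_extremum split: if_splits)
  qed (rule at_j)
qed

lemma ennreal_mean_hitting_time: "expected_hitting_time Q j x = ennreal (mean_hitting_time Q j x)"
  using expected_hitting_time_eq[of Q j x] nn_integral_expected_hitting_time_finite[where j=j and x=x]
  by (auto simp: mean_hitting_time_def less_top top.not_eq_extremum)

lemma integrable_mean_hitting_time: "integrable (Q x) (mean_hitting_time Q j)"
  using nn_integral_expected_hitting_time_finite[where j=j and x=x]
  by (intro integrableI_nonneg) (auto simp: ennreal_mean_hitting_time mean_hitting_time_nonneg)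

lemma nn_integral_mean_hitting_time:
  "(\<integral>\<^sup>+y. expected_hitting_time Q j y \<partial>Q x) = ennreal (\<integral>y. mean_hitting_time Q j y \<partial>Q x)"
  unfolding ennreal_mean_hitting_time
  by (rule nn_integral_eq_integral[OF integrable_mean_hitting_time]) (simp add: mean_hitting_time_nonneg)

lemma integral_mean_hitting_time_nonneg: "0 \<le> (\<integral>y. mean_hitting_time Q j y \<partial>Q x)"
  by (simp add: integral_nonneg_AE mean_hitting_time_nonneg)

lemma mean_hitting_time_eq:
  assumes "x \<noteq> j"
  shows "mean_hitting_time Q j x = 1 + (\<integral>y. mean_hitting_time Q j y \<partial>Q x)"
proof -
  note nonneg = integral_mean_hitting_time_nonneg[where j=j and x=x]
  have "ennreal (mean_hitting_time Q j x) = 1 + ennreal (\<integral>y. mean_hitting_time Q j y \<partial>Q x)"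
    using expected_hitting_time_eq[of Q j x] assms
    by (simp add: ennreal_mean_hitting_time[symmetric] nn_integral_mean_hitting_time[symmetric])
  also have "\<dots> = ennreal (1 + (\<integral>y. mean_hitting_time Q j y \<partial>Q x))"
    using nonneg by simp
  finally show ?thesis
    using nonneg mean_hitting_time_nonneg by (subst (asm) ennreal_inj) auto
qed

(* 1 + \<integral> mean_hitting_time Q j dQ(j) is the mean return time to j. *)

lemma kac_inequality: "pmf \<pi> j * (1 + (\<integral>y. mean_hitting_time Q j y \<partial>Q j)) \<le> 1"
proof -
  have "ennreal (pmf \<pi> j * (\<integral>y. mean_hitting_time Q j y \<partial>Q j)) \<le> ennreal (1 - pmf \<pi> j)"
    using pmf_mult_nn_integral_expected_hitting_time_le[OF invariant, of j]
    by (simp add: nn_integral_mean_hitting_time ennreal_mult integral_mean_hitting_time_nonneg)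
  then have "pmf \<pi> j * (\<integral>y. mean_hitting_time Q j y \<partial>Q j) \<le> 1 - pmf \<pi> j"
    by (subst (asm) ennreal_le_iff) (auto simp: pmf_le_1)
  then show ?thesis by (simp add: algebra_simps)
qed

end

lemma integral_ge_max_imp_eq:
  fixes p :: "'a pmf" and f :: "'a \<Rightarrow> real"
  assumes le: "\<And>z. f z \<le> v" and int: "integrable p f" and ge: "v \<le> (\<integral>z. f z \<partial>p)"
    and z: "z \<in> set_pmf p"
  shows "f z = v"
proof -
  have int': "integrable p (\<lambda>z. v - f z)" and nonneg: "AE z in p. 0 \<le> v - f z"
    using int le by auto
  have "(\<integral>z. v - f z \<partial>p) = 0"
    using int ge integral_nonneg_AE[OF nonneg] by simp
  then have "AE z in p. v - f z = 0"
    using integral_nonneg_eq_0_iff_AE[OF int' nonneg] by simp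
  then show ?thesis using z by (simp add: AE_measure_pmf_iff)
qed

(* Maximum principle for a subharmonic f on (K, \<infinity>): a positive maximum would be attained at a
   least point beyond K, but from there the chain can step further left. *)
lemma maximum_principle:
  fixes Q :: "nat \<Rightarrow> nat pmf" and f :: "nat \<Rightarrow> real"
  assumes low: "\<And>y. real y \<le> K \<Longrightarrow> f y \<le> 0"
    and far: "\<And>y. N < real y \<Longrightarrow> f y \<le> 0"
    and sub: "\<And>y. K < real y \<Longrightarrow> integrable (Q y) f \<and> f y \<le> (\<integral>z. f z \<partial>Q y)"
    and left: "\<And>y. K < real y \<Longrightarrow> \<exists>z \<in> set_pmf (Q y). z < y"
  shows "f x \<le> 0"
proof (rule ccontr)
  assume "\<not> f x \<le> 0"
  then have fx: "0 < f x" by simp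
  have far': "f y \<le> 0" if "nat \<lceil>N\<rceil> < y" for y
    using far[of y] that real_nat_ceiling_ge[of N] by (meson le_less_trans of_nat_less_iff)
  define S where "S = {y. y \<le> nat \<lceil>N\<rceil> \<and> 0 < f y}"
  have finS: "finite S" by (simp add: S_def)
  have xS: "x \<in> S" using fx far'[of x] by (force simp: S_def)
  define v where "v = Max (f ` S)"
  have le_v: "f y \<le> v" for y
  proof (cases "y \<in> S")
    case False
    then have "f y \<le> 0" using far'[of y] by (force simp: S_def)
    moreover have "f x \<le> v" unfolding v_def using finS xS by simp
    ultimately show ?thesis using fx by linarith
  qed (simp add: v_def finS)
  have "v \<in> f ` S" unfolding v_def using finS xS by (intro Max_in) auto
  then obtain y0 where y0: "f y0 = v" by auto
  define xs where "xs = (LEAST y. f y = v)"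
  have fxs: "f xs = v" unfolding xs_def using y0 by (rule LeastI)
  have "0 < v" using le_v[of x] fx by simp
  then have K_xs: "K < real xs" using low[of xs] fxs by force
  then obtain z where z: "z \<in> set_pmf (Q xs)" "z < xs" using left by blast
  have "f z = v"
    using integral_ge_max_imp_eq[where f=f and v=v and p="Q xs", OF le_v _ _ z(1)] sub[OF K_xs] fxs
    by simp
  then show False using not_less_Least[OF z(2)[unfolded xs_def]] by simp
qed

section \<open>The walk Z1\<close>

lemma power4_add_le: "0 \<le> p \<Longrightarrow> 0 \<le> q \<Longrightarrow> (p + q) ^ 4 \<le> 8 * (p ^ 4 + q ^ 4)" for p q :: real
proof -
  assume "0 \<le> p" "0 \<le> q"
  have "(p + q)\<^sup>2 \<le> 2 * (p\<^sup>2 + q\<^sup>2)"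
    using zero_le_power2[of "p - q"] by (simp add: power2_eq_square algebra_simps)
  then have "(p + q) ^ 4 \<le> (2 * (p\<^sup>2 + q\<^sup>2))\<^sup>2"
    using power_mono[of "(p + q)\<^sup>2" _ 2] by (simp flip: power_mult)
  also have "\<dots> \<le> 8 * (p ^ 4 + q ^ 4)"
    using zero_le_power2[of "p\<^sup>2 - q\<^sup>2"] by (simp add: power2_eq_square power4_eq_xxxx algebra_simps)
  finally show ?thesis .
qed

lemma power4_le_exp: "0 \<le> u \<Longrightarrow> 0 < \<eta> \<Longrightarrow> u ^ 4 \<le> (4 / \<eta>) ^ 4 * exp (\<eta> * u)" for u \<eta> :: real
proof -
  assume u: "0 \<le> u" and e: "0 < \<eta>"
  have "\<eta> * u / 4 \<le> exp (\<eta> * u / 4)" using exp_ge_add_one_self[of "\<eta> * u / 4"] by linarith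
  then have "(\<eta> * u / 4) ^ 4 \<le> (exp (\<eta> * u / 4)) ^ 4" using u e by (intro power_mono) auto
  also have "(exp (\<eta> * u / 4)) ^ 4 = exp (\<eta> * u)" by (simp add: exp_of_nat_mult[symmetric])
  finally show ?thesis using e by (simp add: field_simps)
qed

definition jump_size :: "int \<times> int \<Rightarrow> real" where
  "jump_size d = \<bar>real_of_int (fst d)\<bar> + \<bar>real_of_int (snd d)\<bar>"

locale walk_Z1 =
  fixes k0 :: nat and \<mu> :: "(int \<times> int) pmf" and \<mu>'' :: "nat \<Rightarrow> (int \<times> int) pmf"
    and \<delta> \<gamma> C :: real and \<pi> :: "nat pmf"
  assumes A1_mu: "\<And>a b. a < - int k0 \<or> b < - int k0 \<Longrightarrow> pmf \<mu> (a, b) = 0"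
    and A1_mu'': "\<And>i a b. i < k0 \<Longrightarrow> b < - int k0 \<or> a < - int i \<Longrightarrow> pmf (\<mu>'' i) (a, b) = 0"
    and pos: "0 < \<delta>" "0 < \<gamma>" "0 < C"
    and exp_moment: "\<And>x. (\<integral>\<^sup>+d. ennreal (exp (\<delta> * real_of_int (fst d) + \<gamma> * real_of_int (snd d)))
                         \<partial>measure_pmf (if k0 \<le> x then \<mu> else \<mu>'' x)) \<le> ennreal C"
    and irreducible_Z1: "irreducible_kernel (trZ1 k0 \<mu> \<mu>'')"
    and m1_neg: "measure_pmf.expectation \<mu> (\<lambda>d. real_of_int (fst d)) < 0"
    and invariant_X1: "invariant_distr (trX1 k0 \<mu> \<mu>'') \<pi>"
begin

abbreviation P :: "nat \<times> int \<Rightarrow> (nat \<times> int) pmf" where "P \<equiv> trZ1 k0 \<mu> \<mu>''"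
abbreviation Q :: "nat \<Rightarrow> nat pmf" where "Q \<equiv> trX1 k0 \<mu> \<mu>''"

definition jump :: "nat \<Rightarrow> (int \<times> int) pmf" where
  "jump x = (if k0 \<le> x then \<mu> else \<mu>'' x)"

lemma P_eq: "P s = map_pmf (\<lambda>d. (nat (int (fst s) + fst d), snd s + snd d)) (jump (fst s))"
  by (simp add: trZ1_def jump_def)

lemma Q_eq: "Q x = map_pmf (\<lambda>d. nat (int x + fst d)) (jump x)"
  by (simp add: trX1_def trZ1_def jump_def map_pmf_comp)

lemma jump_support:
  assumes "d \<in> set_pmf (jump x)"
  shows "- int x \<le> fst d" "- int k0 \<le> fst d" "- int k0 \<le> snd d"
proof -
  obtain a b where d: "d = (a, b)" by force
  have pos: "pmf (jump x) (a, b) \<noteq> 0" using assms d by (simp add: set_pmf_iff)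
  have "- int x \<le> a \<and> - int k0 \<le> a \<and> - int k0 \<le> b"
  proof (cases "k0 \<le> x")
    case True
    then have "\<not> (a < - int k0 \<or> b < - int k0)" using pos A1_mu[of a b] by (auto simp: jump_def)
    then show ?thesis using True by auto
  next
    case False
    then have "\<not> (b < - int k0 \<or> a < - int x)" using pos A1_mu''[of x b a] by (auto simp: jump_def)
    then show ?thesis using False by auto
  qed
  then show "- int x \<le> fst d" "- int k0 \<le> fst d" "- int k0 \<le> snd d" using d by auto
qed

lemma real_nat_step: "d \<in> set_pmf (jump x) \<Longrightarrow> real (nat (int x + fst d)) = real x + real_of_int (fst d)"
  using jump_support(1)[of d x] by simp

sublocale X1: positive_recurrent_kernel Q \<pi>
proof
  show "irreducible_kernel Q"
    by (rule irreducible_kernel_map[OF irreducible_Z1, where f=fst])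
       (auto simp: P_eq Q_eq map_pmf_comp surj_def)
qed (rule invariant_X1)

definition moment4_bound :: real where
  "moment4_bound = (4 / min \<delta> \<gamma>) ^ 4 * exp ((4 * min \<delta> \<gamma> + \<delta> + \<gamma>) * real k0) * C"

lemma moment4_bound_pos: "0 < moment4_bound"
  using pos by (simp add: moment4_bound_def)

(* Bound (|a| + |b|)^4 by (a + b + 4 k0)^4 and use power4_le_exp with exponent min \<delta> \<gamma>. *)
lemma jump_size_power4_le_exp:
  assumes "d \<in> set_pmf (jump x)"
  shows "jump_size d ^ 4 \<le> moment4_bound / C * exp (\<delta> * real_of_int (fst d) + \<gamma> * real_of_int (snd d))"
proof -
  define a where "a = real_of_int (fst d)"
  define b where "b = real_of_int (snd d)"
  define \<eta> where "\<eta> = min \<delta> \<gamma>"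
  have e: "0 < \<eta>" "\<eta> \<le> \<delta>" "\<eta> \<le> \<gamma>" unfolding \<eta>_def using pos by auto
  have a0: "- real k0 \<le> a" and b0: "- real k0 \<le> b"
    unfolding a_def b_def using jump_support(2,3)[OF assms] by linarith+
  define u where "u = a + b + 4 * real k0"
  have "jump_size d ^ 4 \<le> u ^ 4"
    unfolding jump_size_def a_def[symmetric] b_def[symmetric] u_def using a0 b0 by (intro power_mono) auto
  also have "\<dots> \<le> (4 / \<eta>) ^ 4 * exp (\<eta> * u)" using a0 b0 e by (intro power4_le_exp) (auto simp: u_def)
  also have "\<eta> * u \<le> \<delta> * a + \<gamma> * b + (4 * \<eta> + \<delta> + \<gamma>) * real k0"
  proof -
    have "0 \<le> (\<delta> - \<eta>) * (a + real k0)" "0 \<le> (\<gamma> - \<eta>) * (b + real k0)" "0 \<le> \<eta> * real k0"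
      using e a0 b0 by simp_all
    then show ?thesis unfolding u_def by (simp add: algebra_simps)
  qed
  then have "(4 / \<eta>) ^ 4 * exp (\<eta> * u) \<le> (4 / \<eta>) ^ 4 * exp (\<delta> * a + \<gamma> * b + (4 * \<eta> + \<delta> + \<gamma>) * real k0)"
    by (intro mult_left_mono) auto
  also have "\<dots> = moment4_bound / C * exp (\<delta> * a + \<gamma> * b)"
    using pos by (simp add: moment4_bound_def \<eta>_def exp_add)
  finally show ?thesis by (simp add: a_def b_def)
qed

lemma jump_moment4:
  "integrable (jump x) (\<lambda>d. jump_size d ^ 4)" "(\<integral>d. jump_size d ^ 4 \<partial>jump x) \<le> moment4_bound"
proof -
  have "(\<integral>\<^sup>+d. ennreal (jump_size d ^ 4) \<partial>jump x)
     \<le> (\<integral>\<^sup>+d. ennreal (moment4_bound / C) * ennreal (exp (\<delta> * real_of_int (fst d) + \<gamma> * real_of_int (snd d))) \<partial>jump x)"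
    using jump_size_power4_le_exp moment4_bound_pos pos
    by (intro nn_integral_mono_AE AE_pmfI) (simp add: ennreal_mult[symmetric] ennreal_leI)
  also have "\<dots> \<le> ennreal (moment4_bound / C) * ennreal C"
    using exp_moment[of x] by (simp add: nn_integral_cmult jump_def mult_left_mono)
  also have "\<dots> = ennreal moment4_bound"
    using pos moment4_bound_pos by (simp flip: ennreal_mult)
  finally have fin: "(\<integral>\<^sup>+d. ennreal (jump_size d ^ 4) \<partial>jump x) \<le> ennreal moment4_bound" .
  show int: "integrable (jump x) (\<lambda>d. jump_size d ^ 4)"
    using fin by (intro integrableI_nonneg) (auto simp: jump_size_def intro: le_less_trans)
  have "ennreal (\<integral>d. jump_size d ^ 4 \<partial>jump x) \<le> ennreal moment4_bound"
    using fin by (subst nn_integral_eq_integral[OF int, symmetric]) (auto simp: jump_size_def)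
  then show "(\<integral>d. jump_size d ^ 4 \<partial>jump x) \<le> moment4_bound"
    using moment4_bound_pos by (simp add: ennreal_le_iff)
qed

lemma jump_moment4_affine:
  fixes G :: "int \<times> int \<Rightarrow> real"
  assumes G: "\<And>d. d \<in> set_pmf (jump x) \<Longrightarrow> \<bar>G d\<bar> \<le> \<alpha> + \<beta> * jump_size d"
    and a: "0 \<le> \<alpha>" and b: "0 \<le> \<beta>"
  shows "integrable (jump x) (\<lambda>d. G d ^ 4)"
    "(\<integral>d. G d ^ 4 \<partial>jump x) \<le> 8 * \<alpha> ^ 4 + 8 * \<beta> ^ 4 * moment4_bound"
    "integrable (jump x) G"
proof -
  have iD: "integrable (jump x) (\<lambda>d. 8 * \<alpha> ^ 4 + 8 * \<beta> ^ 4 * jump_size d ^ 4)"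
    using jump_moment4(1) by simp
  have pw: "G d ^ 4 \<le> 8 * \<alpha> ^ 4 + 8 * \<beta> ^ 4 * jump_size d ^ 4" if "d \<in> set_pmf (jump x)" for d
  proof -
    have "G d ^ 4 = \<bar>G d\<bar> ^ 4" by (simp add: power_even_abs_numeral)
    also have "\<dots> \<le> (\<alpha> + \<beta> * jump_size d) ^ 4" using G[OF that] by (intro power_mono) auto
    also have "\<dots> \<le> 8 * (\<alpha> ^ 4 + (\<beta> * jump_size d) ^ 4)"
      using a b by (intro power4_add_le) (auto simp: jump_size_def)
    finally show ?thesis by (simp add: power_mult_distrib algebra_simps)
  qed
  show i4: "integrable (jump x) (\<lambda>d. G d ^ 4)"
    by (rule Bochner_Integration.integrable_bound[OF iD])
       (use pw in \<open>auto intro!: AE_pmfI simp: power_even_abs_numeral\<close>)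
  have "(\<integral>d. G d ^ 4 \<partial>jump x) \<le> (\<integral>d. 8 * \<alpha> ^ 4 + 8 * \<beta> ^ 4 * jump_size d ^ 4 \<partial>jump x)"
    by (rule integral_mono_AE[OF i4 iD]) (use pw in \<open>auto intro: AE_pmfI\<close>)
  also have "\<dots> \<le> 8 * \<alpha> ^ 4 + 8 * \<beta> ^ 4 * moment4_bound"
    using jump_moment4 b by (simp add: mult_left_mono)
  finally show "(\<integral>d. G d ^ 4 \<partial>jump x) \<le> 8 * \<alpha> ^ 4 + 8 * \<beta> ^ 4 * moment4_bound" .
  show "integrable (jump x) G"
    using integrable_power_le_4[OF i4, of 1] by simp
qed

definition mean_bound :: real where "mean_bound = 1 + 8 * moment4_bound"

lemma mean_bound_pos: "0 < mean_bound"
  using moment4_bound_pos by (simp add: mean_bound_def)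

lemma abs_integral_jump_le:
  assumes "\<And>d. d \<in> set_pmf (jump x) \<Longrightarrow> \<bar>G d\<bar> \<le> jump_size d"
  shows "\<bar>\<integral>d. G d \<partial>jump x\<bar> \<le> mean_bound"
proof -
  have "\<bar>G d\<bar> \<le> 0 + 1 * jump_size d" if "d \<in> set_pmf (jump x)" for d
    using assms[OF that] by simp
  note moments = jump_moment4_affine[where x=x and G=G, OF this order_refl zero_le_one]
  have "\<bar>\<integral>d. G d \<partial>jump x\<bar> \<le> 1 + (\<integral>d. G d ^ 4 \<partial>jump x)"
    using abs_moment_le_1_plus_power4[where k=1, OF moments(1)] by simp
  then show ?thesis using moments(2) by (simp add: mean_bound_def)
qed

definition drift :: "nat \<Rightarrow> real" where "drift x = (\<integral>d. real_of_int (fst d) \<partial>jump x)"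
definition vertical_drift :: "nat \<Rightarrow> real" where "vertical_drift x = (\<integral>d. real_of_int (snd d) \<partial>jump x)"
definition m1 :: real where "m1 = (\<integral>d. real_of_int (fst d) \<partial>\<mu>)"
definition m2 :: real where "m2 = (\<integral>d. real_of_int (snd d) \<partial>\<mu>)"

lemma m1_neg': "m1 < 0" using m1_neg by (simp add: m1_def)

lemma drift_eq_m1: "k0 \<le> x \<Longrightarrow> drift x = m1" by (simp add: drift_def m1_def jump_def)
lemma vertical_drift_eq_m2: "k0 \<le> x \<Longrightarrow> vertical_drift x = m2"
  by (simp add: vertical_drift_def m2_def jump_def)

lemma integrable_jump_fst: "integrable (jump x) (\<lambda>d. real_of_int (fst d))"
  by (rule jump_moment4_affine(3)[where \<alpha>=0 and \<beta>=1]) (auto simp: jump_size_def)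

lemma integrable_jump_snd: "integrable (jump x) (\<lambda>d. real_of_int (snd d))"
  by (rule jump_moment4_affine(3)[where \<alpha>=0 and \<beta>=1]) (auto simp: jump_size_def)

lemma abs_drift_le: "\<bar>drift x\<bar> \<le> mean_bound"
  unfolding drift_def by (rule abs_integral_jump_le) (simp add: jump_size_def)

lemma abs_vertical_drift_le: "\<bar>vertical_drift x\<bar> \<le> mean_bound"
  unfolding vertical_drift_def by (rule abs_integral_jump_le) (simp add: jump_size_def)

end

context walk_Z1
begin

lemma integrable_Q_affine:
  assumes f: "\<And>y. \<bar>f y\<bar> \<le> \<alpha> + \<beta> * real y" and a: "0 \<le> \<alpha>" and b: "0 \<le> \<beta>"
  shows "integrable (Q x) f"
proof -
  have "\<bar>f (nat (int x + fst d))\<bar> \<le> (\<alpha> + \<beta> * real x) + \<beta> * jump_size d"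
    if d: "d \<in> set_pmf (jump x)" for d
  proof -
    have "\<bar>f (nat (int x + fst d))\<bar> \<le> \<alpha> + \<beta> * (real x + real_of_int (fst d))"
      using f[of "nat (int x + fst d)"] real_nat_step[OF d] by simp
    also have "\<dots> \<le> \<alpha> + \<beta> * real x + \<beta> * jump_size d"
      using mult_left_mono[OF _ b, of "real_of_int (fst d)" "jump_size d"]
      by (simp add: jump_size_def algebra_simps)
    finally show ?thesis by simp
  qed
  then have "integrable (jump x) (\<lambda>d. f (nat (int x + fst d)))"
    by (rule jump_moment4_affine(3)) (use a b in auto)
  then show ?thesis by (simp add: Q_eq)
qed

lemma integral_Q_real: "integrable (Q x) real" "(\<integral>y. real y \<partial>Q x) = real x + drift x"
proof -
  show "integrable (Q x) real" by (rule integrable_Q_affine[where \<alpha>=0 and \<beta>=1]) auto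
  have "(\<integral>y. real y \<partial>Q x) = (\<integral>d. real x + real_of_int (fst d) \<partial>jump x)"
    unfolding Q_eq by (auto intro!: integral_cong_AE AE_pmfI dest: real_nat_step)
  also have "\<dots> = real x + drift x" using integrable_jump_fst by (simp add: drift_def)
  finally show "(\<integral>y. real y \<partial>Q x) = real x + drift x" .
qed

definition second_moment1 :: real where "second_moment1 = (\<integral>d. (real_of_int (fst d))\<^sup>2 \<partial>\<mu>)"

lemma integral_Q_square:
  assumes x: "k0 \<le> x"
  shows "integrable (Q x) (\<lambda>y. (real y)\<^sup>2)"
    "(\<integral>y. (real y)\<^sup>2 \<partial>Q x) = (real x)\<^sup>2 + 2 * real x * m1 + second_moment1"
proof -
  have i4: "integrable (jump x) (\<lambda>d. (real_of_int (fst d)) ^ 4)"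
    by (rule jump_moment4_affine(1)[where \<alpha>=0 and \<beta>=1]) (auto simp: jump_size_def)
  have i2: "integrable (jump x) (\<lambda>d. (real_of_int (fst d))\<^sup>2)"
    using integrable_power_le_4[where k=2, OF i4] by simp
  have expand: "(real x + real_of_int (fst d))\<^sup>2
      = (real x)\<^sup>2 + (2 * real x) * real_of_int (fst d) + (real_of_int (fst d))\<^sup>2" for d
    by (simp add: power2_eq_square algebra_simps)
  have ae: "AE d in jump x. (real (nat (int x + fst d)))\<^sup>2 = (real x + real_of_int (fst d))\<^sup>2"
    by (auto intro!: AE_pmfI dest: real_nat_step)
  have "integrable (jump x) (\<lambda>d. (real x + real_of_int (fst d))\<^sup>2)"
    unfolding expand using i2 integrable_jump_fst by simp
  then show "integrable (Q x) (\<lambda>y. (real y)\<^sup>2)"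
    unfolding Q_eq integrable_map_pmf_eq using integrable_cong_AE[OF _ _ ae] by simp
  have "(\<integral>y. (real y)\<^sup>2 \<partial>Q x) = (\<integral>d. (real x + real_of_int (fst d))\<^sup>2 \<partial>jump x)"
    unfolding Q_eq by (simp add: integral_cong_AE[OF _ _ ae])
  also have "\<dots> = (real x)\<^sup>2 + (2 * real x) * drift x + (\<integral>d. (real_of_int (fst d))\<^sup>2 \<partial>jump x)"
    unfolding expand using i2 integrable_jump_fst by (simp add: drift_def)
  also have "\<dots> = (real x)\<^sup>2 + 2 * real x * m1 + second_moment1"
    using x by (simp add: drift_eq_m1 second_moment1_def jump_def)
  finally show "(\<integral>y. (real y)\<^sup>2 \<partial>Q x) = (real x)\<^sup>2 + 2 * real x * m1 + second_moment1" .
qed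

lemma m1_ge: "- real k0 \<le> m1"
proof -
  have "AE d in \<mu>. - real k0 \<le> real_of_int (fst d)"
    using jump_support(2)[of _ k0] by (intro AE_pmfI) (force simp: jump_def)
  then have "(\<integral>d. - real k0 \<partial>\<mu>) \<le> m1"
    unfolding m1_def using integrable_jump_fst[of k0] by (intro integral_mono_AE) (auto simp: jump_def)
  then show ?thesis by simp
qed

lemma Q_left_step:
  assumes "k0 \<le> y"
  shows "\<exists>z \<in> set_pmf (Q y). z < y"
proof -
  obtain d where d: "d \<in> set_pmf \<mu>" "fst d < 0"
  proof (rule ccontr)
    assume "\<not> thesis"
    then have "AE d in \<mu>. 0 \<le> real_of_int (fst d)" using that by (force intro!: AE_pmfI)
    then have "0 \<le> m1" unfolding m1_def by (rule integral_nonneg_AE)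
    then show False using m1_neg' by simp
  qed
  then have "d \<in> set_pmf (jump y)" using assms by (simp add: jump_def)
  then show ?thesis
    using d real_nat_step[of d y] by (intro bexI[of _ "nat (int y + fst d)"]) (auto simp: Q_eq)
qed

abbreviation hit :: "nat \<Rightarrow> nat \<Rightarrow> real" where "hit j \<equiv> mean_hitting_time Q j"

definition hit_bound :: "nat \<Rightarrow> real" where "hit_bound j = (\<Sum>i\<le>k0 + j. hit j i)"

lemma hit_bound_nonneg: "0 \<le> hit_bound j"
  by (simp add: hit_bound_def sum_nonneg mean_hitting_time_nonneg)

(* x / (- m1) + hit_bound j is a supersolution of the hitting-time equation beyond k0 + j. *)
lemma hit_upper: "hit j x \<le> real x / (- m1) + hit_bound j"
proof -
  define a where "a = - m1"
  have a: "0 < a" using m1_neg' by (simp add: a_def)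
  have "expected_hitting_time Q j x \<le> ennreal (real x / a + hit_bound j)"
  proof (rule expected_hitting_time_le_supersolution[where A="{..k0 + j}"])
    fix x assume "x \<in> {..k0 + j}"
    then have "hit j x \<le> hit_bound j"
      unfolding hit_bound_def by (intro member_le_sum) (auto simp: mean_hitting_time_nonneg)
    then show "expected_hitting_time Q j x \<le> ennreal (real x / a + hit_bound j)"
      using a by (simp add: X1.ennreal_mean_hitting_time ennreal_leI add_increasing)
  next
    fix x assume "x \<notin> {..k0 + j}" "x \<noteq> j"
    then have x: "k0 \<le> x" by simp
    have "a \<le> real x" using m1_ge x by (simp add: a_def)
    then have ge1: "1 \<le> real x / a" using a by simp
    have "(\<integral>\<^sup>+y. ennreal (real y / a + hit_bound j) \<partial>Q x) = ennreal (\<integral>y. real y / a + hit_bound j \<partial>Q x)"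
      using integral_Q_real(1) a hit_bound_nonneg by (intro nn_integral_eq_integral) auto
    also have "(\<integral>y. real y / a + hit_bound j \<partial>Q x) = (real x / a + hit_bound j) - 1"
      using integral_Q_real[of x] drift_eq_m1[OF x] a by (simp add: a_def field_simps)
    finally have "1 + (\<integral>\<^sup>+y. ennreal (real y / a + hit_bound j) \<partial>Q x)
        = ennreal (1 + ((real x / a + hit_bound j) - 1))"
      using ennreal_plus[of 1 "real x / a + hit_bound j - 1"] ge1 hit_bound_nonneg[of j]
      by (simp del: ennreal_plus)
    then show "1 + (\<integral>\<^sup>+y. ennreal (real y / a + hit_bound j) \<partial>Q x) \<le> ennreal (real x / a + hit_bound j)"
      by simp
  qed
  then have "ennreal (hit j x) \<le> ennreal (real x / a + hit_bound j)"
    by (simp add: X1.ennreal_mean_hitting_time)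
  then have "hit j x \<le> real x / a + hit_bound j"
    using a hit_bound_nonneg[of j] by (subst (asm) ennreal_le_iff) auto
  then show ?thesis by (simp add: a_def)
qed

definition lower_offset :: "nat \<Rightarrow> real" where
  "lower_offset j = real (k0 + j) + \<bar>second_moment1\<bar> / (2 * (- m1))"

lemma lower_offset_ge: "real (k0 + j) \<le> lower_offset j"
proof -
  have "0 \<le> \<bar>second_moment1\<bar> / (2 * (- m1))" using m1_neg' by (intro divide_nonneg_pos) auto
  then show ?thesis unfolding lower_offset_def by linarith
qed

definition lower_test :: "nat \<Rightarrow> real \<Rightarrow> nat \<Rightarrow> real" where
  "lower_test j e y = (real y - lower_offset j) / (- m1) - hit j y - e * (real y)\<^sup>2"

lemma lower_test_subharmonic:
  assumes y: "lower_offset j < real y" and e: "0 \<le> e"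
  shows "integrable (Q y) (lower_test j e)" "lower_test j e y \<le> (\<integral>z. lower_test j e z \<partial>Q y)"
proof -
  define a where "a = - m1"
  have a: "0 < a" using m1_neg' by (simp add: a_def)
  have "real (k0 + j) < real y" using y lower_offset_ge[of j] by linarith
  then have yk: "k0 \<le> y" and yj: "y \<noteq> j" by auto
  have "\<bar>second_moment1\<bar> / (2 * a) < real y" using y by (simp add: lower_offset_def a_def)
  then have sig: "second_moment1 \<le> 2 * a * real y" using a by (simp add: field_simps)
  note i1 = integral_Q_real(1)[of y] and i2 = X1.integrable_mean_hitting_time[of y j]
    and i3 = integral_Q_square(1)[OF yk]
  show "integrable (Q y) (lower_test j e)"
    unfolding lower_test_def using i1 i2 i3 by (simp add: diff_divide_distrib)
  have "(\<integral>z. lower_test j e z \<partial>Q y)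
      = ((\<integral>z. real z \<partial>Q y) - lower_offset j) / a - (\<integral>z. hit j z \<partial>Q y) - e * (\<integral>z. (real z)\<^sup>2 \<partial>Q y)"
    unfolding lower_test_def a_def using i1 i2 i3 by (simp add: diff_divide_distrib)
  also have "\<dots> = ((real y + m1) - lower_offset j) / a - (hit j y - 1)
      - e * ((real y)\<^sup>2 + 2 * real y * m1 + second_moment1)"
    using integral_Q_real(2)[of y] drift_eq_m1[OF yk] X1.mean_hitting_time_eq[OF yj]
      integral_Q_square(2)[OF yk] by simp
  also have "\<dots> = lower_test j e y - e * (second_moment1 - 2 * a * real y)"
    unfolding lower_test_def a_def using m1_neg' by (simp add: field_simps)
  finally show "lower_test j e y \<le> (\<integral>z. lower_test j e z \<partial>Q y)"
    using e sig by (simp add: mult_nonneg_nonpos)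
qed

(* If the bound failed at x, a test function with a small quadratic correction would be positive at x,
   contradicting the maximum principle. *)
lemma hit_lower: "(real x - lower_offset j) / (- m1) \<le> hit j x"
proof (rule ccontr)
  define a where "a = - m1"
  have a: "0 < a" using m1_neg' by (simp add: a_def)
  assume "\<not> (real x - lower_offset j) / (- m1) \<le> hit j x"
  define D where "D = (real x - lower_offset j) / a - hit j x"
  have D: "0 < D" using \<open>\<not> _ \<le> _\<close> by (simp add: D_def a_def)
  define e where "e = D / (2 * (real x)\<^sup>2 + 1)"
  have den: "0 < 2 * (real x)\<^sup>2 + 1" by (simp add: add_nonneg_pos)
  have e: "0 < e" unfolding e_def using D den by simp
  have "e * (real x)\<^sup>2 = D * ((real x)\<^sup>2 / (2 * (real x)\<^sup>2 + 1))" by (simp add: e_def)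
  also have "\<dots> < D * 1" using D den by (intro mult_strict_left_mono) auto
  finally have "e * (real x)\<^sup>2 < D" by simp
  then have "0 < lower_test j e x" by (simp add: lower_test_def D_def a_def)
  moreover have "lower_test j e x \<le> 0"
  proof (rule maximum_principle[where K="lower_offset j" and N="1 / (a * e)" and Q=Q])
    fix y assume "real y \<le> lower_offset j"
    then have "(real y - lower_offset j) / a \<le> 0" using a by (simp add: divide_nonpos_pos)
    moreover have "0 \<le> e * (real y)\<^sup>2" using e by simp
    ultimately show "lower_test j e y \<le> 0"
      using mean_hitting_time_nonneg[of Q j y] by (simp add: lower_test_def a_def)
  next
    fix y assume y: "1 / (a * e) < real y"
    have "0 \<le> lower_offset j" using lower_offset_ge[of j] by linarith
    then have "(real y - lower_offset j) / a \<le> real y / a" using a by (simp add: divide_right_mono)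
    also have "real y / a \<le> e * (real y)\<^sup>2"
    proof -
      have "1 < a * e * real y" using y a e by (simp add: field_simps)
      then have "real y * 1 \<le> real y * (a * e * real y)" by (intro mult_left_mono) auto
      then show ?thesis using a by (simp add: field_simps power2_eq_square)
    qed
    finally show "lower_test j e y \<le> 0"
      using mean_hitting_time_nonneg[of Q j y] by (simp add: lower_test_def a_def)
  next
    fix y assume "lower_offset j < real y"
    then show "integrable (Q y) (lower_test j e) \<and> lower_test j e y \<le> (\<integral>z. lower_test j e z \<partial>Q y)"
      using lower_test_subharmonic e by simp
  next
    fix y assume "lower_offset j < real y"
    then have "k0 \<le> y" using lower_offset_ge[of j] by simp
    then show "\<exists>z \<in> set_pmf (Q y). z < y" by (rule Q_left_step)
  qed
  ultimately show False by simp
qed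

definition linear_error :: "nat \<Rightarrow> real" where
  "linear_error j = lower_offset j / (- m1) + hit_bound j"

lemma linear_error_nonneg: "0 \<le> linear_error j"
proof -
  have "0 \<le> lower_offset j / (- m1)"
    using lower_offset_ge[of j] m1_neg' by (intro divide_nonneg_pos) auto
  then show ?thesis using hit_bound_nonneg[of j] by (simp add: linear_error_def)
qed

lemma abs_hit_linear_le: "\<bar>hit j y - real y / (- m1)\<bar> \<le> linear_error j"
proof -
  have "0 \<le> lower_offset j / (- m1)"
    using lower_offset_ge[of j] m1_neg' by (intro divide_nonneg_pos) auto
  moreover have "(real y - lower_offset j) / (- m1) = real y / (- m1) - lower_offset j / (- m1)"
    by (simp add: diff_divide_distrib)
  ultimately show ?thesis
    using hit_lower[of y j] hit_upper[of j y] hit_bound_nonneg[of j]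
    unfolding linear_error_def by (simp add: abs_le_iff)
qed

lemma abs_integral_hit_linear_le:
  "\<bar>(\<integral>y. hit j y \<partial>Q x) - (real x + drift x) / (- m1)\<bar> \<le> linear_error j"
proof -
  have "(\<integral>y. hit j y \<partial>Q x) - (real x + drift x) / (- m1) = (\<integral>y. hit j y - real y / (- m1) \<partial>Q x)"
    using X1.integrable_mean_hitting_time[of x j] integral_Q_real[of x] by simp
  also have "\<bar>\<dots>\<bar> \<le> (\<integral>y. \<bar>hit j y - real y / (- m1)\<bar> \<partial>Q x)" by (rule integral_abs_bound)
  also have "\<dots> \<le> (\<integral>y. linear_error j \<partial>Q x)"
    using X1.integrable_mean_hitting_time[of x j] integral_Q_real(1)[of x] abs_hit_linear_le
    by (intro integral_mono) auto
  finally show ?thesis by simp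
qed

end

context walk_Z1
begin

lemma integral_P: "(\<integral>s'. G s' \<partial>P s) = (\<integral>d. G (nat (int (fst s) + fst d), snd s + snd d) \<partial>jump (fst s))"
  for G :: "nat \<times> int \<Rightarrow> real"
  by (simp add: P_eq)

lemma integrable_P_iff:
  "integrable (P s) G \<longleftrightarrow> integrable (jump (fst s)) (\<lambda>d. G (nat (int (fst s) + fst d), snd s + snd d))"
  for G :: "nat \<times> int \<Rightarrow> real"
  by (simp add: P_eq)

definition hit_increment :: "nat \<Rightarrow> nat \<times> int \<Rightarrow> nat \<times> int \<Rightarrow> real" where
  "hit_increment j s s' = hit j (fst s') - (\<integral>y. hit j y \<partial>Q (fst s))"

lemma hit_increment_eq:
  "hit_increment j s s' = hit j (fst s') - hit j (fst s) + 1 - (1 + (\<integral>y. hit j y \<partial>Q j)) * of_bool (fst s = j)"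
  by (cases "fst s = j") (simp_all add: hit_increment_def mean_hitting_time_self X1.mean_hitting_time_eq)

(* hit j is within linear_error j of y / (- m1), so its increments are controlled by the jump size. *)
lemma abs_hit_increment_le:
  assumes d: "d \<in> set_pmf (jump x)"
  shows "\<bar>hit j (nat (int x + fst d)) - (\<integral>y. hit j y \<partial>Q x)\<bar>
    \<le> (2 * linear_error j + mean_bound / (- m1)) + (1 / (- m1)) * jump_size d"
proof -
  define c where "c = 1 / (- m1)"
  have c: "0 < c" unfolding c_def using m1_neg' by simp
  define y where "y = nat (int x + fst d)"
  have "h = (hit j y - real y * c) + c * (real_of_int (fst d) - drift x)
      - ((\<integral>y. hit j y \<partial>Q x) - (real x + drift x) * c)"
    if "h = hit j y - (\<integral>y. hit j y \<partial>Q x)" for h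
    using that real_nat_step[OF d] by (simp add: y_def algebra_simps)
  moreover have "\<bar>hit j y - real y * c\<bar> \<le> linear_error j"
    using abs_hit_linear_le[of j y] by (simp add: c_def)
  moreover have "\<bar>(\<integral>y. hit j y \<partial>Q x) - (real x + drift x) * c\<bar> \<le> linear_error j"
    using abs_integral_hit_linear_le[where j=j and x=x] by (simp add: c_def)
  moreover have "\<bar>c * (real_of_int (fst d) - drift x)\<bar> \<le> c * (jump_size d + mean_bound)"
    using abs_drift_le[of x] c by (simp add: abs_mult jump_size_def mult_left_mono)
  ultimately have "\<bar>hit j y - (\<integral>y. hit j y \<partial>Q x)\<bar> \<le> 2 * linear_error j + c * (jump_size d + mean_bound)"
    by fastforce
  then show ?thesis by (simp add: y_def c_def algebra_simps)
qed

lemma hit_increment_moments: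
  "integrable (P s) (\<lambda>s'. hit_increment j s s' ^ 4)"
  "(\<integral>s'. hit_increment j s s' \<partial>P s) = 0"
  "(\<integral>s'. hit_increment j s s' ^ 4 \<partial>P s)
     \<le> 8 * (2 * linear_error j + mean_bound / (- m1)) ^ 4 + 8 * (1 / (- m1)) ^ 4 * moment4_bound"
proof -
  obtain x y where s: "s = (x, y)" by force
  have "0 \<le> mean_bound / (- m1)" using mean_bound_pos m1_neg' by (intro divide_nonneg_pos) auto
  then have \<alpha>: "0 \<le> 2 * linear_error j + mean_bound / (- m1)" using linear_error_nonneg[of j] by linarith
  have \<beta>: "0 \<le> 1 / (- m1)" using m1_neg' by simp
  note moments = jump_moment4_affine[where x=x
      and G="\<lambda>d. hit j (nat (int x + fst d)) - (\<integral>y. hit j y \<partial>Q x)", OF abs_hit_increment_le \<alpha> \<beta>]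
  show "integrable (P s) (\<lambda>s'. hit_increment j s s' ^ 4)"
    using moments(1) m1_neg' by (simp add: integrable_P_iff s hit_increment_def)
  show "(\<integral>s'. hit_increment j s s' ^ 4 \<partial>P s)
      \<le> 8 * (2 * linear_error j + mean_bound / (- m1)) ^ 4 + 8 * (1 / (- m1)) ^ 4 * moment4_bound"
    using moments(2) m1_neg' by (simp add: integral_P s hit_increment_def)
  have "(\<integral>d. hit j (nat (int x + fst d)) \<partial>jump x) = (\<integral>y. hit j y \<partial>Q x)" by (simp add: Q_eq)
  then show "(\<integral>s'. hit_increment j s s' \<partial>P s) = 0"
    using moments(3) m1_neg' X1.integrable_mean_hitting_time[of x j]
    by (simp add: integral_P s hit_increment_def Q_eq)
qed

definition vertical_increment :: "nat \<times> int \<Rightarrow> nat \<times> int \<Rightarrow> real" where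
  "vertical_increment s s' = real_of_int (snd s' - snd s) - vertical_drift (fst s)"

lemma vertical_increment_moments:
  "integrable (P s) (\<lambda>s'. vertical_increment s s' ^ 4)"
  "(\<integral>s'. vertical_increment s s' \<partial>P s) = 0"
  "(\<integral>s'. vertical_increment s s' ^ 4 \<partial>P s) \<le> 8 * mean_bound ^ 4 + 8 * 1 ^ 4 * moment4_bound"
proof -
  obtain x y where s: "s = (x, y)" by force
  have "\<bar>real_of_int (snd d) - vertical_drift x\<bar> \<le> mean_bound + 1 * jump_size d" for d
    using abs_vertical_drift_le[of x] abs_triangle_ineq4[of "real_of_int (snd d)" "vertical_drift x"]
      abs_ge_zero[of "real_of_int (fst d)"]
    unfolding jump_size_def by simp
  note moments = jump_moment4_affine[where x=x and G="\<lambda>d. real_of_int (snd d) - vertical_drift x",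
      OF this less_imp_le[OF mean_bound_pos] zero_le_one]
  show "integrable (P s) (\<lambda>s'. vertical_increment s s' ^ 4)"
    using moments(1) by (simp add: integrable_P_iff s vertical_increment_def)
  show "(\<integral>s'. vertical_increment s s' ^ 4 \<partial>P s) \<le> 8 * mean_bound ^ 4 + 8 * 1 ^ 4 * moment4_bound"
    using moments(2) by (simp add: integral_P s vertical_increment_def)
  show "(\<integral>s'. vertical_increment s s' \<partial>P s) = 0"
    using integrable_jump_snd[of x] by (simp add: integral_P s vertical_increment_def vertical_drift_def)
qed

(* Summed over m < n, the increments hit_increment j telescope to
   h_j(X_n) - h_j(X_0) + n - E_j[return time to j] * (number of visits to j), and by Kac's
   inequality E_j[return time to j] <= 1 / pi j. *)
lemma AE_visit_frequency_ge:
  assumes mc: "markov_chain_from M P x0 Z"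
  shows "AE \<omega> in M. \<forall>e>0. eventually (\<lambda>n. pmf \<pi> j - e \<le> visit_frequency (\<lambda>m. fst (Z m \<omega>)) j n) sequentially"
proof -
  define c where "c = 1 + (\<integral>y. hit j y \<partial>Q j)"
  have c: "0 < c" using X1.integral_mean_hitting_time_nonneg[where j=j and x=j] by (simp add: c_def)
  have pc: "pmf \<pi> j * c \<le> 1" unfolding c_def by (rule X1.kac_inequality)
  have "AE \<omega> in M. (\<lambda>n. (\<Sum>m<n. hit_increment j (Z m \<omega>) (Z (Suc m) \<omega>)) / real n) \<longlonglongrightarrow> 0"
    by (rule markov_chain_increments_slln[OF mc hit_increment_moments])
  then show ?thesis
  proof (rule AE_mp, intro AE_I2 impI allI)
    fix \<omega> and e :: real
    assume "(\<lambda>n. (\<Sum>m<n. hit_increment j (Z m \<omega>) (Z (Suc m) \<omega>)) / real n) \<longlonglongrightarrow> 0" and e: "0 < e"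
    then have "(\<lambda>n. (\<Sum>m<n. hit j (fst (Z (Suc m) \<omega>)) - hit j (fst (Z m \<omega>)) + 1
        - c * of_bool (fst (Z m \<omega>) = j)) / real n) \<longlonglongrightarrow> 0"
      by (simp add: hit_increment_eq c_def)
    from average_lower_bound_of_potential[OF this mean_hitting_time_nonneg c pc e]
    show "eventually (\<lambda>n. pmf \<pi> j - e \<le> visit_frequency (\<lambda>m. fst (Z m \<omega>)) j n) sequentially"
      by (simp add: visit_frequency_def)
  qed
qed

lemma AE_visit_frequency_tendsto:
  assumes mc: "markov_chain_from M P x0 Z"
  shows "AE \<omega> in M. \<forall>j. (\<lambda>n. visit_frequency (\<lambda>m. fst (Z m \<omega>)) j n) \<longlonglongrightarrow> pmf \<pi> j"
proof -
  have "AE \<omega> in M. \<forall>j. \<forall>e>0. eventually (\<lambda>n. pmf \<pi> j - e \<le> visit_frequency (\<lambda>m. fst (Z m \<omega>)) j n) sequentially"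
    using AE_visit_frequency_ge[OF mc] by (subst AE_all_countable) auto
  then show ?thesis
    by (rule AE_mp) (auto intro!: AE_I2 tendsto_of_lower_bounds_sums_1 sum_visit_frequency_le_1 pmf_sums_1)
qed

lemma integrable_P_snd: "integrable (P (i, 0)) (\<lambda>s. real_of_int (snd s))"
  using integrable_jump_snd[of i] by (simp add: integrable_P_iff)

lemma integral_P_snd: "(\<integral>s. real_of_int (snd s) \<partial>P (i, 0)) = vertical_drift i"
  by (simp add: integral_P vertical_drift_def)

lemma summable_abs_pmf_vertical_drift: "summable (\<lambda>i. \<bar>pmf \<pi> i * vertical_drift i\<bar>)"
proof (rule summable_comparison_test)
  show "\<exists>N. \<forall>n\<ge>N. norm \<bar>pmf \<pi> n * vertical_drift n\<bar> \<le> mean_bound * pmf \<pi> n"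
    using abs_vertical_drift_le by (auto simp: abs_mult mult.commute intro!: mult_left_mono)
  show "summable (\<lambda>n. mean_bound * pmf \<pi> n)"
    using summable_mult[OF sums_summable[OF pmf_sums_1]] by simp
qed

definition velocity :: real where "velocity = m2 + (\<Sum>i<k0. (vertical_drift i - m2) * pmf \<pi> i)"

lemma vertical_drift_sums: "(\<lambda>i. pmf \<pi> i * vertical_drift i) sums velocity"
proof -
  have "(\<lambda>i. pmf \<pi> i * m2 + pmf \<pi> i * (vertical_drift i - m2))
      sums (1 * m2 + (\<Sum>i<k0. pmf \<pi> i * (vertical_drift i - m2)))"
    by (intro sums_add sums_mult2 pmf_sums_1 sums_finite) (auto simp: vertical_drift_eq_m2)
  then show ?thesis by (simp add: velocity_def algebra_simps mult.commute)
qed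

lemma average_vertical_drift:
  assumes "0 < n"
  shows "(\<Sum>m<n. vertical_drift (X m)) / real n = m2 + (\<Sum>i<k0. (vertical_drift i - m2) * visit_frequency X i n)"
proof -
  have decomp: "vertical_drift x = m2 + (\<Sum>i<k0. (vertical_drift i - m2) * of_bool (x = i))" for x
  proof (cases "x < k0")
    case True
    then have "(\<Sum>i<k0. (vertical_drift i - m2) * of_bool (x = i)) = vertical_drift x - m2"
      by (simp add: of_bool_def if_distrib[of "\<lambda>t. (_::real) * t"] sum.delta' cong: if_cong)
    then show ?thesis by simp
  next
    case False
    then have "(\<Sum>i<k0. (vertical_drift i - m2) * of_bool (x = i)) = 0" by (intro sum.neutral) auto
    then show ?thesis using False by (simp add: vertical_drift_eq_m2)
  qed
  have "(\<Sum>m<n. vertical_drift (X m)) = (\<Sum>m<n. m2 + (\<Sum>i<k0. (vertical_drift i - m2) * of_bool (X m = i)))"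
    by (rule sum.cong[OF refl]) (rule decomp)
  also have "\<dots> = real n * m2 + (\<Sum>m<n. \<Sum>i<k0. (vertical_drift i - m2) * of_bool (X m = i))"
    by (simp add: sum.distrib)
  also have "(\<Sum>m<n. \<Sum>i<k0. (vertical_drift i - m2) * of_bool (X m = i))
      = (\<Sum>i<k0. (vertical_drift i - m2) * (\<Sum>m<n. of_bool (X m = i)))"
    by (subst sum.swap) (simp add: sum_distrib_left mult.commute)
  finally show ?thesis
    using assms by (simp add: visit_frequency_def add_divide_distrib sum_divide_distrib)
qed

lemma AE_vertical_velocity:
  assumes mc: "markov_chain_from M P (k, l) Z"
  shows "AE \<omega> in M. (\<lambda>n. real_of_int (snd (Z n \<omega>)) / real n) \<longlonglongrightarrow> velocity"
proof -
  have "AE \<omega> in M. (\<lambda>n. (\<Sum>m<n. vertical_increment (Z m \<omega>) (Z (Suc m) \<omega>)) / real n) \<longlonglongrightarrow> 0"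
    by (rule markov_chain_increments_slln[OF mc vertical_increment_moments])
  moreover have "AE \<omega> in M. Z 0 \<omega> = (k, l)" using mc by (simp add: markov_chain_from_def)
  moreover note AE_visit_frequency_tendsto[OF mc]
  ultimately show ?thesis
  proof eventually_elim
    case (elim \<omega>)
    define S where "S n = (\<Sum>m<n. vertical_increment (Z m \<omega>) (Z (Suc m) \<omega>))" for n
    have Y: "real_of_int (snd (Z n \<omega>)) = real_of_int l + S n + (\<Sum>m<n. vertical_drift (fst (Z m \<omega>)))" for n
      by (induction n) (use elim(2) in \<open>simp_all add: S_def vertical_increment_def\<close>)
    have "(\<lambda>n. real_of_int l / real n + S n / real n
        + (m2 + (\<Sum>i<k0. (vertical_drift i - m2) * visit_frequency (\<lambda>m. fst (Z m \<omega>)) i n)))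
        \<longlonglongrightarrow> 0 + 0 + (m2 + (\<Sum>i<k0. (vertical_drift i - m2) * pmf \<pi> i))"
      using elim(1,3) unfolding S_def by (intro tendsto_intros) auto
    moreover have "eventually (\<lambda>n. real_of_int l / real n + S n / real n
        + (m2 + (\<Sum>i<k0. (vertical_drift i - m2) * visit_frequency (\<lambda>m. fst (Z m \<omega>)) i n))
        = real_of_int (snd (Z n \<omega>)) / real n) sequentially"
      using eventually_gt_at_top[of 0]
      by eventually_elim (simp add: Y average_vertical_drift[symmetric] add_divide_distrib)
    ultimately show ?case
      unfolding velocity_def by (simp add: Lim_transform_eventually)
  qed
qed

end

theorem proposition2p2:
  fixes k0 :: nat
    and \<mu> :: "(int\<times>int) pmf"
    and \<mu>' \<mu>'' :: "nat \<Rightarrow> (int\<times>int) pmf"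
    and \<mu>ij :: "nat \<Rightarrow> nat \<Rightarrow> (int\<times>int) pmf"
    and \<delta> \<gamma> C :: real
    and \<pi>1 :: "nat pmf"
    and M :: "'w measure"
    and Z1 :: "nat \<Rightarrow> 'w \<Rightarrow> nat \<times> int"
    and k :: nat and l :: int
  assumes k0: "k0 \<ge> 1"
    (* (A1) *)
    and A1_mu: "\<And>a b. (a < - int k0 \<or> b < - int k0) \<Longrightarrow> pmf \<mu> (a, b) = 0"
    and A1_mu': "\<And>j a b. j < k0 \<Longrightarrow> (a < - int k0 \<or> b < - int j) \<Longrightarrow> pmf (\<mu>' j) (a, b) = 0"
    and A1_mu'': "\<And>i a b. i < k0 \<Longrightarrow> (b < - int k0 \<or> a < - int i) \<Longrightarrow> pmf (\<mu>'' i) (a, b) = 0"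
    and A1_muij: "\<And>i j a b. i < k0 \<Longrightarrow> j < k0 \<Longrightarrow> (a < - int i \<or> b < - int j) \<Longrightarrow> pmf (\<mu>ij i j) (a, b) = 0"
    (* (A2) *)
    and A2: "\<delta> > 0" "\<gamma> > 0" "C > 0"
      "\<And>i j. (\<integral>\<^sup>+ d. ennreal (exp (\<delta> * real_of_int (fst d) + \<gamma> * real_of_int (snd d)))
                 \<partial>measure_pmf (incZ k0 \<mu> \<mu>' \<mu>'' \<mu>ij (i, j))) \<le> ennreal C"
    (* (A3) *)
    and A3: "irreducible_kernel (trZ0 \<mu>)" "irreducible_kernel (trZ1 k0 \<mu> \<mu>'')"
      "irreducible_kernel (trZ2 k0 \<mu> \<mu>')" "irreducible_kernel (trZ k0 \<mu> \<mu>' \<mu>'' \<mu>ij)"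
    (* m1 < 0 *)
    and m1_neg: "measure_pmf.expectation \<mu> (\<lambda>d. real_of_int (fst d)) < 0"
    (* pi1 is the invariant distribution of X1 *)
    and pi1: "invariant_distr (trX1 k0 \<mu> \<mu>'') \<pi>1"
    (* Z1 is a realization of the chain Z1 under P_(k,l) *)
    and chain: "markov_chain_from M (trZ1 k0 \<mu> \<mu>'') (k, l) Z1"
  shows "(\<forall>i. integrable (measure_pmf (trZ1 k0 \<mu> \<mu>'' (i, 0))) (\<lambda>s. real_of_int (snd s)))
       \<and> summable (\<lambda>i. \<bar>pmf \<pi>1 i * measure_pmf.expectation (trZ1 k0 \<mu> \<mu>'' (i, 0)) (\<lambda>s. real_of_int (snd s))\<bar>)
       \<and> (AE \<omega> in M. (\<lambda>n. real_of_int (snd (Z1 n \<omega>)) / real n) \<longlonglongrightarrow>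
             (\<Sum>i. pmf \<pi>1 i * measure_pmf.expectation (trZ1 k0 \<mu> \<mu>'' (i, 0)) (\<lambda>s. real_of_int (snd s))))"
proof -
  interpret walk_Z1 k0 \<mu> \<mu>'' \<delta> \<gamma> C \<pi>1
  proof
    show "(\<integral>\<^sup>+d. ennreal (exp (\<delta> * real_of_int (fst d) + \<gamma> * real_of_int (snd d)))
            \<partial>measure_pmf (if k0 \<le> x then \<mu> else \<mu>'' x)) \<le> ennreal C" for x
      using A2(4)[of x k0] by (cases "k0 \<le> x") (simp_all add: incZ_def)
  qed (use A1_mu A1_mu'' A2 A3 m1_neg pi1 in auto)
  have "(\<Sum>i. pmf \<pi>1 i * vertical_drift i) = velocity"
    using vertical_drift_sums by (rule sums_unique[symmetric])
  then show ?thesis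
    using integrable_P_snd summable_abs_pmf_vertical_drift AE_vertical_velocity[OF chain]
    by (simp add: integral_P_snd)
qed

end
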